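(* Let $p>1$ and identify $S^1$ with $[-\pi,\pi]$ with endpoints identified. Let $V\in L^\infty(S^1)$ and suppose there is a constant $m$ with $V\ge m>0$. For $\epsilon>0$ consider $\mathcal{L}_\epsilon=-\epsilon^2\frac{d^2}{dx^2}+V$ as a map $W^{2,p}(S^1)\to L^p(S^1)$. Then $\mathcal{L}_\epsilon$ is continuously invertible, and there is a constant $C$ (independent of $\epsilon$) such that for all sufficiently small $\epsilon>0$, $$\|\mathcal{L}_\epsilon^{-1}\|\le C\epsilon^{-4},$$ where the norm is the operator norm from $L^p(S^1)$ to $W^{2,p}(S^1)$. *)

theory Defs
  imports "HOL-Analysis.Analysis"
begin

text \<open>The circle S^1 is identified with [-pi,pi] (endpoints identified).
  Functions on S^1 are real functions whose values on [-pi,pi] matter;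
  the measure is Lebesgue measure on [-pi,pi].\<close>

abbreviation S1 :: "real measure" where
  "S1 \<equiv> lebesgue_on {-pi..pi}"

definition Lp :: "real \<Rightarrow> (real \<Rightarrow> real) \<Rightarrow> bool" where
  "Lp p f \<longleftrightarrow> f \<in> borel_measurable S1 \<and> integrable S1 (\<lambda>x. \<bar>f x\<bar> powr p)"

definition Lp_norm :: "real \<Rightarrow> (real \<Rightarrow> real) \<Rightarrow> real" where
  "Lp_norm p f = (\<integral>x. \<bar>f x\<bar> powr p \<partial>S1) powr (1 / p)"

definition Linf :: "(real \<Rightarrow> real) \<Rightarrow> bool" where
  "Linf V \<longleftrightarrow> V \<in> borel_measurable S1 \<and> (\<exists>B. AE x in S1. \<bar>V x\<bar> \<le> B)"

definition smooth_periodic :: "(real \<Rightarrow> real) \<Rightarrow> bool" where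
  "smooth_periodic \<phi> \<longleftrightarrow> (\<forall>n. ((deriv ^^ n) \<phi>) differentiable_on UNIV)
                          \<and> (\<forall>x. \<phi> (x + 2 * pi) = \<phi> x)"

definition weak_deriv :: "(real \<Rightarrow> real) \<Rightarrow> (real \<Rightarrow> real) \<Rightarrow> bool" where
  "weak_deriv f g \<longleftrightarrow> (\<forall>\<phi>. smooth_periodic \<phi> \<longrightarrow>
       (\<integral>x. f x * deriv \<phi> x \<partial>S1) = - (\<integral>x. g x * \<phi> x \<partial>S1))"

definition W2p :: "real \<Rightarrow> (real \<Rightarrow> real) \<Rightarrow> (real \<Rightarrow> real) \<Rightarrow> (real \<Rightarrow> real) \<Rightarrow> bool" where
  "W2p p u u1 u2 \<longleftrightarrow> Lp p u \<and> Lp p u1 \<and> Lp p u2 \<and> weak_deriv u u1 \<and> weak_deriv u1 u2"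

definition W2p_norm :: "real \<Rightarrow> (real \<Rightarrow> real) \<Rightarrow> (real \<Rightarrow> real) \<Rightarrow> (real \<Rightarrow> real) \<Rightarrow> real" where
  "W2p_norm p u u1 u2 = Lp_norm p u + Lp_norm p u1 + Lp_norm p u2"

definition Lop :: "real \<Rightarrow> (real \<Rightarrow> real) \<Rightarrow> (real \<Rightarrow> real) \<Rightarrow> (real \<Rightarrow> real) \<Rightarrow> real \<Rightarrow> real" where
  "Lop \<epsilon> V u u2 = (\<lambda>x. - (\<epsilon>\<^sup>2) * u2 x + V x * u x)"

end

theory Submission
  imports Defs
begin

text \<open>Every function of the weak Sobolev class on the circle has a continuous representative
  \<open>u = c + \<integral>u'\<close>, \<open>u' = a + \<integral>u''\<close> (du Bois-Reymond lemma, proved through the density of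
  trigonometric polynomials).  Testing \<open>f = -\<epsilon>\<^sup>2 u'' + V u\<close> against \<open>u\<close> gives the energy identity
  \<open>\<epsilon>\<^sup>2 \<parallel>u'\<parallel>\<^sub>2\<^sup>2 + \<integral>V u\<^sup>2 = \<integral>f u\<close>; together with \<open>sup |u| \<le> \<parallel>u\<parallel>\<^sub>1/2\<pi> + \<parallel>u'\<parallel>\<^sub>1\<close> and AM-GM this yields
  \<open>sup |u| \<le> (1/(2\<pi>m) + 2\<pi>/\<epsilon>\<^sup>2) \<parallel>f\<parallel>\<^sub>1\<close>, and the equation then controls \<open>u''\<close> and \<open>u'\<close>.  This gives
  uniqueness and the \<open>W\<^sup>2\<^sup>,\<^sup>p\<close> bound with a constant of order \<open>\<epsilon>\<^sup>-\<^sup>4\<close>.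
  For existence, the initial value problem \<open>y'' = (V y - g)/\<epsilon>\<^sup>2\<close> is solved by the Neumann series of
  the Volterra operator \<open>w \<mapsto> \<integral>\<integral>(V/\<epsilon>\<^sup>2) w\<close>; periodicity imposes two affine conditions on the
  initial data \<open>(y(-\<pi>), y'(-\<pi>))\<close>, whose linear part is injective by uniqueness.\<close>

lemma measure_S1_space [simp]: "measure S1 {-pi..pi} = 2*pi"
  by (simp add: measure_restrict_space)

interpretation S1: finite_measure S1
  by (rule finite_measure_lebesgue_on) simp

interpretation S1_pair: pair_sigma_finite S1 S1
  by (simp add: pair_sigma_finite_def S1.sigma_finite_measure_axioms)

lemma continuous_on_imp_measurable_S1:
  "continuous_on {-pi..pi} f \<Longrightarrow> f \<in> borel_measurable S1"
  by (rule continuous_imp_measurable_on_sets_lebesgue) auto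

lemma measurable_ident_S1 [measurable]: "(\<lambda>x. x) \<in> borel_measurable S1"
  by (rule continuous_on_imp_measurable_S1) (rule continuous_on_id)

lemma AE_S1_neq: "AE x in S1. x \<noteq> a"
proof -
  have "AE x in lebesgue. x \<noteq> a"
    using AE_not_in[of "{a}"] by fastforce
  thus ?thesis by (subst AE_restrict_space_iff) (auto elim!: eventually_mono)
qed

lemma AE_S1_const: "(AE x in S1. P) \<Longrightarrow> P"
proof (rule ccontr)
  assume "AE x in S1. P" "\<not> P"
  hence "emeasure S1 (space S1) = 0"
    by (metis ae_filter_eq_bot_iff trivial_limit_def)
  thus False using measure_S1_space by (simp add: measure_def)
qed

lemma AE_S1_I: "(\<And>x. x \<in> {-pi..pi} \<Longrightarrow> P x) \<Longrightarrow> AE x in S1. P x"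
  by (rule AE_I2) auto

lemma integrable_S1_dominated:
  fixes h k :: "real \<Rightarrow> real"
  assumes "integrable S1 h" "k \<in> borel_measurable S1" "AE x in S1. \<bar>k x\<bar> \<le> \<bar>h x\<bar>"
  shows "integrable S1 k"
  by (rule Bochner_Integration.integrable_bound[OF assms(1,2)]) (use assms(3) in auto)

lemma integrable_S1_AE_bounded:
  fixes k :: "real \<Rightarrow> real"
  assumes "k \<in> borel_measurable S1" "AE x in S1. \<bar>k x\<bar> \<le> c"
  shows "integrable S1 k"
  by (rule Bochner_Integration.integrable_bound[of S1 "\<lambda>x. c", OF _ assms(1)])
     (use assms(2) in \<open>auto elim!: eventually_mono\<close>)

lemma continuous_on_S1_bounded:
  assumes "continuous_on {-pi..pi} (w::real \<Rightarrow> real)"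
  obtains K where "K \<ge> 0" "\<And>t. t \<in> {-pi..pi} \<Longrightarrow> \<bar>w t\<bar> \<le> K"
proof -
  obtain B where "\<forall>y\<in>w ` {-pi..pi}. norm y \<le> B"
    using compact_imp_bounded[OF compact_continuous_image[OF assms compact_Icc]]
    unfolding bounded_iff by blast
  moreover from this have "B \<ge> 0" using pi_ge_zero by force
  ultimately show ?thesis using that by auto
qed

lemma integrable_S1_continuous_on:
  assumes "continuous_on {-pi..pi} (f::real \<Rightarrow> real)"
  shows "integrable S1 f"
proof -
  obtain K where "\<And>t. t \<in> {-pi..pi} \<Longrightarrow> \<bar>f t\<bar> \<le> K"
    using continuous_on_S1_bounded[OF assms] by blast
  thus ?thesis
    by (intro integrable_S1_AE_bounded[of f K] continuous_on_imp_measurable_S1 assms AE_S1_I)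
qed

lemma integrable_S1_mult_continuous_on:
  assumes g: "integrable S1 (g::real \<Rightarrow> real)" and k: "continuous_on {-pi..pi} k"
  shows "integrable S1 (\<lambda>x. g x * k x)"
proof -
  obtain B where B: "\<And>x. x \<in> {-pi..pi} \<Longrightarrow> \<bar>k x\<bar> \<le> B"
    using continuous_on_S1_bounded[OF k] by blast
  have [measurable]: "g \<in> borel_measurable S1" using g by simp
  have [measurable]: "k \<in> borel_measurable S1" by (rule continuous_on_imp_measurable_S1[OF k])
  have "\<bar>g x * k x\<bar> \<le> \<bar>B * g x\<bar>" if "x \<in> {-pi..pi}" for x
  proof -
    have "\<bar>g x\<bar> * \<bar>k x\<bar> \<le> \<bar>g x\<bar> * \<bar>B\<bar>"
      using B[OF that] by (intro mult_left_mono) auto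
    thus ?thesis by (simp add: abs_mult mult.commute)
  qed
  hence ae: "AE x in S1. \<bar>g x * k x\<bar> \<le> \<bar>B * g x\<bar>" by (rule AE_S1_I)
  have "integrable S1 (\<lambda>x. B * g x)" using g by simp
  thus ?thesis by (rule integrable_S1_dominated[OF _ _ ae]) measurable
qed

lemma integral_S1_eq_integral:
  assumes "integrable S1 (f::real \<Rightarrow> real)"
  shows "(\<integral>x. f x \<partial>S1) = integral {-pi..pi} f"
  using assms by (rule lebesgue_integral_eq_integral) simp

lemma integrable_S1_imp_integrable_on:
  assumes "integrable S1 (f::real \<Rightarrow> real)"
  shows "f integrable_on {-pi..pi}"
  using assms by (rule integrable_on_lebesgue_on) simp

lemma powr_add_le:
  fixes x y r :: real
  assumes "0 \<le> x" "0 \<le> y" "0 < r" "r \<le> 1"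
  shows "(x + y) powr r \<le> x powr r + y powr r"
proof (cases "x + y = 0")
  case True thus ?thesis using assms by auto
next
  case False
  hence s: "x + y > 0" using assms by auto
  have a: "x / (x+y) \<le> (x/(x+y)) powr r"
    using powr_mono'[of r 1 "x/(x+y)"] assms s by (simp add: divide_le_eq_1)
  have b: "y / (x+y) \<le> (y/(x+y)) powr r"
    using powr_mono'[of r 1 "y/(x+y)"] assms s by (simp add: divide_le_eq_1)
  have "1 = x/(x+y) + y/(x+y)" using s by (simp add: add_divide_distrib[symmetric])
  also have "\<dots> \<le> (x/(x+y)) powr r + (y/(x+y)) powr r" using a b by simp
  also have "\<dots> = (x powr r + y powr r) / (x+y) powr r"
    using assms s by (simp add: powr_divide add_divide_distrib)
  finally show ?thesis using s by (simp add: le_divide_eq)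
qed

lemma powr_add_le_two_powr:
  fixes s t p :: real
  assumes "0 \<le> s" "0 \<le> t" "0 \<le> p"
  shows "(s + t) powr p \<le> 2 powr p * (s powr p + t powr p)"
proof -
  have "(s + t) powr p \<le> (2 * max s t) powr p" using assms by (intro powr_mono2) auto
  also have "\<dots> = 2 powr p * max s t powr p" by (simp add: powr_mult)
  also have "max s t powr p \<le> s powr p + t powr p" by (cases "s \<le> t") (auto simp: max_def)
  finally show ?thesis by simp
qed

lemma Lp_imp_integrable:
  assumes p: "p > 1" and "Lp p h"
  shows "integrable S1 h"
proof -
  have m: "h \<in> borel_measurable S1" and i: "integrable S1 (\<lambda>x. \<bar>h x\<bar> powr p)"
    using assms unfolding Lp_def by auto
  have "\<bar>h x\<bar> \<le> \<bar>1 + \<bar>h x\<bar> powr p\<bar>" for x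
  proof -
    have "\<bar>h x\<bar> \<le> 1 + \<bar>h x\<bar> powr p"
    proof (cases "\<bar>h x\<bar> \<le> 1")
      case True thus ?thesis by (smt (verit) powr_ge_zero)
    next
      case False
      hence "\<bar>h x\<bar> powr 1 \<le> \<bar>h x\<bar> powr p" using p by (intro powr_mono) auto
      thus ?thesis using False by simp
    qed
    thus ?thesis by simp
  qed
  thus ?thesis
    by (intro integrable_S1_dominated[OF _ m, of "\<lambda>x. 1 + \<bar>h x\<bar> powr p"] AE_I2) (use i in simp_all)
qed

lemma Lp_norm_nonneg: "Lp_norm p h \<ge> 0"
  unfolding Lp_norm_def by simp

text \<open>The constant is \<open>2\<pi> + 1\<close> rather than \<open>(2\<pi>)\<^sup>1\<^sup>-\<^sup>1\<^sup>/\<^sup>p\<close> because the bound is proved pointwise,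
  from \<open>|h| \<le> N + |h|\<^sup>p / N\<^sup>p\<^sup>-\<^sup>1\<close> with \<open>N = \<parallel>h\<parallel>\<^sub>p\<close>, instead of by Hoelder's inequality.\<close>
lemma L1_le_Lp_norm:
  assumes p: "p > 1" and h: "Lp p h"
  shows "(\<integral>x. \<bar>h x\<bar> \<partial>S1) \<le> (2*pi+1) * Lp_norm p h"
proof -
  have m[measurable]: "h \<in> borel_measurable S1" and i: "integrable S1 (\<lambda>x. \<bar>h x\<bar> powr p)"
    using h unfolding Lp_def by auto
  have hi: "integrable S1 h" using Lp_imp_integrable[OF p h] .
  define J where "J = (\<integral>x. \<bar>h x\<bar> powr p \<partial>S1)"
  define N where "N = Lp_norm p h"
  have J0: "J \<ge> 0" unfolding J_def by simp
  have NJ: "N = J powr (1/p)" unfolding N_def J_def Lp_norm_def ..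
  show ?thesis
  proof (cases "J = 0")
    case True
    hence "AE x in S1. \<bar>h x\<bar> powr p = 0"
      using integral_nonneg_eq_0_iff_AE[OF i] unfolding J_def by auto
    hence "AE x in S1. \<bar>h x\<bar> = 0" by (auto elim!: eventually_mono)
    hence "(\<integral>x. \<bar>h x\<bar> \<partial>S1) = (\<integral>x. 0 \<partial>S1)" by (intro integral_cong_AE) auto
    thus ?thesis using Lp_norm_nonneg[of p h] by simp
  next
    case False
    hence Jp: "J > 0" using J0 by simp
    hence Np: "N > 0" using NJ by simp
    have NpJ: "N powr p = J" using NJ Jp p by (simp add: powr_powr)
    have pt: "\<bar>h x\<bar> \<le> N + \<bar>h x\<bar> powr p / N powr (p - 1)" for x
    proof (cases "\<bar>h x\<bar> \<le> N")
      case True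
      have "0 \<le> \<bar>h x\<bar> powr p / N powr (p - 1)" by simp
      thus ?thesis using True by linarith
    next
      case False
      hence hp: "\<bar>h x\<bar> > 0" using Np by simp
      have "1 \<le> (\<bar>h x\<bar> / N) powr (p - 1)"
        using False Np p by (intro ge_one_powr_ge_zero) (auto simp: le_divide_eq)
      hence "\<bar>h x\<bar> \<le> \<bar>h x\<bar> * (\<bar>h x\<bar> / N) powr (p - 1)" using hp by simp
      also have "\<dots> = \<bar>h x\<bar> powr p / N powr (p - 1)"
        using hp Np by (simp add: powr_divide powr_diff)
      finally show ?thesis using Np by linarith
    qed
    have "(\<integral>x. \<bar>h x\<bar> \<partial>S1) \<le> (\<integral>x. N + \<bar>h x\<bar> powr p / N powr (p - 1) \<partial>S1)"
      using pt hi i by (intro integral_mono) auto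
    also have "\<dots> = 2*pi*N + J / N powr (p - 1)"
      using i unfolding J_def by (simp add: integral_add)
    also have "J / N powr (p - 1) = N powr p / N powr (p - 1)" using NpJ by simp
    also have "\<dots> = N powr (p - (p - 1))" by (simp add: powr_diff)
    also have "\<dots> = N" using Np by simp
    finally have "(\<integral>x. \<bar>h x\<bar> \<partial>S1) \<le> 2*pi*N + N" .
    thus ?thesis unfolding N_def by (simp add: distrib_right)
  qed
qed

lemma Lp_AE_bounded:
  assumes p: "p > 1" and m: "h \<in> borel_measurable S1" and c: "c \<ge> 0"
    and b: "AE x in S1. \<bar>h x\<bar> \<le> c"
  shows "Lp p h" "Lp_norm p h \<le> (2*pi) powr (1/p) * c"
proof -
  have [measurable]: "(\<lambda>x. \<bar>h x\<bar> powr p) \<in> borel_measurable S1"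
    using m by (rule measurable_abs_powr)
  have bb: "AE x in S1. \<bar>\<bar>h x\<bar> powr p\<bar> \<le> c powr p"
    using b p by (auto elim!: eventually_mono intro!: powr_mono2)
  have i: "integrable S1 (\<lambda>x. \<bar>h x\<bar> powr p)"
    by (rule integrable_S1_AE_bounded[OF _ bb]) measurable
  thus "Lp p h" using m unfolding Lp_def by simp
  have "(\<integral>x. \<bar>h x\<bar> powr p \<partial>S1) \<le> (\<integral>x. c powr p \<partial>S1)"
    using bb i by (intro integral_mono_AE) (auto elim!: eventually_mono)
  hence "(\<integral>x. \<bar>h x\<bar> powr p \<partial>S1) powr (1/p) \<le> (2*pi * c powr p) powr (1/p)"
    using p by (intro powr_mono2) auto
  also have "\<dots> = (2*pi) powr (1/p) * c"
    using p c by (simp add: powr_mult powr_powr)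
  finally show "Lp_norm p h \<le> (2*pi) powr (1/p) * c" unfolding Lp_norm_def .
qed

lemma Lp_continuous_on:
  assumes p: "p > 1" and y: "continuous_on {-pi..pi} y"
  shows "Lp p y"
proof -
  obtain K where K0: "K \<ge> 0" and Kb: "\<And>t. t \<in> {-pi..pi} \<Longrightarrow> \<bar>y t\<bar> \<le> K"
    using continuous_on_S1_bounded[OF y] by blast
  show ?thesis
    by (rule Lp_AE_bounded(1)[OF p continuous_on_imp_measurable_S1[OF y] K0]) (rule AE_S1_I, rule Kb)
qed

lemma Lp_AE_le_lincomb:
  assumes p: "p > 1" and a: "Lp p a" and b: "Lp p b" and m: "h \<in> borel_measurable S1"
    and al: "\<alpha> \<ge> 0" and be: "\<beta> \<ge> 0"
    and bd: "AE x in S1. \<bar>h x\<bar> \<le> \<alpha> * \<bar>a x\<bar> + \<beta> * \<bar>b x\<bar>"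
  shows "Lp p h"
proof -
  have ai: "integrable S1 (\<lambda>x. \<bar>a x\<bar> powr p)" using a unfolding Lp_def by auto
  have bi: "integrable S1 (\<lambda>x. \<bar>b x\<bar> powr p)" using b unfolding Lp_def by auto
  have mm[measurable]: "(\<lambda>x. \<bar>h x\<bar> powr p) \<in> borel_measurable S1"
    using m by (rule measurable_abs_powr)
  have bb: "AE x in S1. \<bar>\<bar>h x\<bar> powr p\<bar> \<le> \<bar>2 powr p * (\<alpha> powr p * \<bar>a x\<bar> powr p + \<beta> powr p * \<bar>b x\<bar> powr p)\<bar>"
  proof (rule eventually_mono[OF bd])
    fix x assume hx: "\<bar>h x\<bar> \<le> \<alpha> * \<bar>a x\<bar> + \<beta> * \<bar>b x\<bar>"
    have "\<bar>h x\<bar> powr p \<le> (\<alpha> * \<bar>a x\<bar> + \<beta> * \<bar>b x\<bar>) powr p" using hx p by (intro powr_mono2) auto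
    also have "\<dots> \<le> 2 powr p * ((\<alpha> * \<bar>a x\<bar>) powr p + (\<beta> * \<bar>b x\<bar>) powr p)" using al be p by (intro powr_add_le_two_powr) auto
    also have "\<dots> = 2 powr p * (\<alpha> powr p * \<bar>a x\<bar> powr p + \<beta> powr p * \<bar>b x\<bar> powr p)"
      using al be by (simp add: powr_mult)
    finally show "\<bar>\<bar>h x\<bar> powr p\<bar> \<le> \<bar>2 powr p * (\<alpha> powr p * \<bar>a x\<bar> powr p + \<beta> powr p * \<bar>b x\<bar> powr p)\<bar>"
      by simp
  qed
  have ri: "integrable S1 (\<lambda>x. 2 powr p * (\<alpha> powr p * \<bar>a x\<bar> powr p + \<beta> powr p * \<bar>b x\<bar> powr p))"
    using ai bi by simp
  have "integrable S1 (\<lambda>x. \<bar>h x\<bar> powr p)"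
    by (rule integrable_S1_dominated[OF ri mm bb])
  thus ?thesis using m unfolding Lp_def by simp
qed

lemma Lp_norm_AE_le_affine:
  assumes p: "p > 1" and a: "Lp p a" and h: "Lp p h"
    and al: "\<alpha> \<ge> 0" and c: "c \<ge> 0"
    and b: "AE x in S1. \<bar>h x\<bar> \<le> \<alpha> * \<bar>a x\<bar> + c"
  shows "Lp_norm p h \<le> 2 * (\<alpha> * Lp_norm p a + (2*pi) powr (1/p) * c)"
proof -
  have ai: "integrable S1 (\<lambda>x. \<bar>a x\<bar> powr p)" and i: "integrable S1 (\<lambda>x. \<bar>h x\<bar> powr p)"
    using a h unfolding Lp_def by auto
  define Ja where "Ja = (\<integral>x. \<bar>a x\<bar> powr p \<partial>S1)"
  have Ja0: "Ja \<ge> 0" unfolding Ja_def by simp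
  have "AE x in S1. \<bar>h x\<bar> powr p \<le> 2 powr p * (\<alpha> powr p * \<bar>a x\<bar> powr p + c powr p)"
  proof (rule eventually_mono[OF b])
    fix x assume hx: "\<bar>h x\<bar> \<le> \<alpha> * \<bar>a x\<bar> + c"
    have "\<bar>h x\<bar> powr p \<le> (\<alpha> * \<bar>a x\<bar> + c) powr p" using hx p by (intro powr_mono2) auto
    also have "\<dots> \<le> 2 powr p * ((\<alpha> * \<bar>a x\<bar>) powr p + c powr p)"
      using al c p by (intro powr_add_le_two_powr) auto
    finally show "\<bar>h x\<bar> powr p \<le> 2 powr p * (\<alpha> powr p * \<bar>a x\<bar> powr p + c powr p)"
      using al by (simp add: powr_mult)
  qed
  moreover have "integrable S1 (\<lambda>x. 2 powr p * (\<alpha> powr p * \<bar>a x\<bar> powr p + c powr p))"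
    using ai by simp
  ultimately have "(\<integral>x. \<bar>h x\<bar> powr p \<partial>S1) \<le> (\<integral>x. 2 powr p * (\<alpha> powr p * \<bar>a x\<bar> powr p + c powr p) \<partial>S1)"
    using i by (intro integral_mono_AE)
  also have "\<dots> = 2 powr p * (\<alpha> powr p * Ja + 2*pi * c powr p)"
    using ai unfolding Ja_def by simp
  finally have "Lp_norm p h \<le> (2 powr p * (\<alpha> powr p * Ja + 2*pi * c powr p)) powr (1/p)"
    unfolding Lp_norm_def using p by (intro powr_mono2) auto
  also have "\<dots> = 2 * (\<alpha> powr p * Ja + 2*pi * c powr p) powr (1/p)"
    using p Ja0 al c by (simp add: powr_mult powr_powr)
  also have "(\<alpha> powr p * Ja + 2*pi * c powr p) powr (1/p)
      \<le> (\<alpha> powr p * Ja) powr (1/p) + (2*pi * c powr p) powr (1/p)"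
    using p Ja0 al c by (intro powr_add_le) auto
  also have "(\<alpha> powr p * Ja) powr (1/p) = \<alpha> * Lp_norm p a"
    using p Ja0 al unfolding Lp_norm_def Ja_def by (simp add: powr_mult powr_powr)
  also have "(2*pi * c powr p) powr (1/p) = (2*pi) powr (1/p) * c"
    using p c by (simp add: powr_mult powr_powr)
  finally show ?thesis by simp
qed
section \<open>Primitives and integration by parts\<close>

definition primitive :: "(real \<Rightarrow> real) \<Rightarrow> real \<Rightarrow> real" where
  "primitive h x = integral {-pi..x} h"

lemma integrable_on_primitive_interval:
  assumes "integrable S1 (h::real\<Rightarrow>real)" "x \<le> pi"
  shows "h integrable_on {-pi..x}"
  using integrable_on_subinterval[OF integrable_S1_imp_integrable_on[OF assms(1)]] assms(2) by auto

lemma continuous_on_primitive: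
  assumes "integrable S1 (h::real\<Rightarrow>real)"
  shows "continuous_on {-pi..pi} (primitive h)"
  unfolding primitive_def using indefinite_integral_continuous_1[OF integrable_S1_imp_integrable_on[OF assms]] .

lemma measurable_primitive [measurable]:
  assumes "integrable S1 (h::real\<Rightarrow>real)"
  shows "primitive h \<in> borel_measurable S1"
  by (rule continuous_on_imp_measurable_S1[OF continuous_on_primitive[OF assms]])

lemma integrable_S1_indicator_mult:
  assumes "integrable S1 (h::real\<Rightarrow>real)"
  shows "integrable S1 (\<lambda>t. indicator {..x} t * h t)"
proof -
  have [measurable]: "h \<in> borel_measurable S1" using assms by simp
  show ?thesis
    by (rule integrable_S1_dominated[OF assms]) (auto simp: indicator_def)
qed

lemma primitive_eq_integral_indicator:
  assumes h: "integrable S1 (h::real\<Rightarrow>real)" and x: "x \<in> {-pi..pi}"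
  shows "primitive h x = (\<integral>t. indicator {..x} t * h t \<partial>S1)"
proof -
  have "(\<integral>t. indicator {..x} t * h t \<partial>S1) = integral {-pi..pi} (\<lambda>t. indicator {..x} t * h t)"
    by (rule integral_S1_eq_integral[OF integrable_S1_indicator_mult[OF h]])
  also have "\<dots> = integral {-pi..pi} (\<lambda>t. if t \<in> {..x} then h t else 0)"
    by (rule integral_cong) (auto simp: indicator_def)
  also have "\<dots> = integral ({..x} \<inter> {-pi..pi}) h" by (rule integral_restrict_Int)
  also have "{..x} \<inter> {-pi..pi} = {-pi..x}" using x by auto
  finally show ?thesis unfolding primitive_def by simp
qed

lemma abs_primitive_le:
  assumes h: "integrable S1 (h::real\<Rightarrow>real)" and x: "x \<in> {-pi..pi}"
  shows "\<bar>primitive h x\<bar> \<le> (\<integral>t. \<bar>h t\<bar> \<partial>S1)"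
proof -
  have "\<bar>primitive h x\<bar> = \<bar>\<integral>t. indicator {..x} t * h t \<partial>S1\<bar>" using primitive_eq_integral_indicator[OF h x] by simp
  also have "\<dots> \<le> (\<integral>t. \<bar>indicator {..x} t * h t\<bar> \<partial>S1)"
    by (rule integral_abs_bound)
  also have "\<dots> \<le> (\<integral>t. \<bar>h t\<bar> \<partial>S1)"
    using integrable_S1_indicator_mult[OF h] h
    by (intro integral_mono) (auto simp: indicator_def)
  finally show ?thesis .
qed

lemma abs_primitive_diff_le:
  assumes h: "integrable S1 (h::real\<Rightarrow>real)" and x: "x \<in> {-pi..pi}" and y: "y \<in> {-pi..pi}"
  shows "\<bar>primitive h x - primitive h y\<bar> \<le> (\<integral>t. \<bar>h t\<bar> \<partial>S1)"
proof -
  have hh[measurable]: "h \<in> borel_measurable S1" using h by simp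
  have "primitive h x - primitive h y = (\<integral>t. (indicator {..x} t - indicator {..y} t) * h t \<partial>S1)"
    using primitive_eq_integral_indicator[OF h x] primitive_eq_integral_indicator[OF h y] integrable_S1_indicator_mult[OF h]
    by (simp add: left_diff_distrib)
  also have "\<bar>\<dots>\<bar> \<le> (\<integral>t. \<bar>(indicator {..x} t - indicator {..y} t) * h t\<bar> \<partial>S1)"
    by (rule integral_abs_bound)
  also have "\<dots> \<le> (\<integral>t. \<bar>h t\<bar> \<partial>S1)"
  proof (rule integral_mono)
    show "integrable S1 (\<lambda>t. \<bar>(indicator {..x} t - indicator {..y} t) * h t\<bar>)"
      by (intro integrable_abs integrable_S1_dominated[OF h]) (auto simp: indicator_def)
  qed (use h in \<open>auto simp: indicator_def\<close>)
  finally show ?thesis .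
qed

lemma primitive_right_end:
  assumes "integrable S1 (h::real\<Rightarrow>real)"
  shows "primitive h pi = (\<integral>t. h t \<partial>S1)"
  unfolding primitive_def using integral_S1_eq_integral[OF assms] by simp

lemma primitive_cong_AE:
  assumes h: "integrable S1 (h::real\<Rightarrow>real)" and k: "integrable S1 k" and e: "AE t in S1. h t = k t"
    and x: "x \<in> {-pi..pi}"
  shows "primitive h x = primitive k x"
  unfolding primitive_eq_integral_indicator[OF h x] primitive_eq_integral_indicator[OF k x]
  by (rule integral_cong_AE) (use h k e in \<open>auto elim!: eventually_mono\<close>)

lemma primitive_add:
  assumes h: "integrable S1 (h::real\<Rightarrow>real)" and k: "integrable S1 k" and x: "x \<le> pi"
  shows "primitive (\<lambda>t. h t + k t) x = primitive h x + primitive k x"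
  unfolding primitive_def using integrable_on_primitive_interval[OF h x] integrable_on_primitive_interval[OF k x]
  by (rule integral_add)

lemma primitive_cong: "(\<And>t. t \<in> {-pi..x} \<Longrightarrow> h t = h' t) \<Longrightarrow> primitive h x = primitive h' x"
  unfolding primitive_def by (rule integral_cong) auto

lemma primitive_cmult: "primitive (\<lambda>t. c * h t) x = c * primitive h x"
  unfolding primitive_def by simp

lemma primitive_lincomb:
  assumes f: "integrable S1 (f::real \<Rightarrow> real)" and g: "integrable S1 g" and h: "integrable S1 h"
    and x: "x \<le> pi"
  shows "primitive (\<lambda>t. a * f t + b * g t + r * h t) x = a * primitive f x + b * primitive g x + r * primitive h x"
proof -
  have "primitive (\<lambda>t. a * f t + b * g t + r * h t) x
      = primitive (\<lambda>t. a * f t + b * g t) x + primitive (\<lambda>t. r * h t) x"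
    by (rule primitive_add) (use f g h x in auto)
  also have "primitive (\<lambda>t. a * f t + b * g t) x = primitive (\<lambda>t. a * f t) x + primitive (\<lambda>t. b * g t) x"
    by (rule primitive_add) (use f g x in auto)
  finally show ?thesis by (simp add: primitive_cmult)
qed

lemma primitive_const: "x \<ge> -pi \<Longrightarrow> primitive (\<lambda>t. c) x = c * (x + pi)"
  unfolding primitive_def by simp

lemma abs_primitive_le_primitive:
  assumes h: "integrable S1 (h::real\<Rightarrow>real)" and x: "x \<in> {-pi..pi}"
    and b: "AE t in S1. \<bar>h t\<bar> \<le> b t" and bc: "continuous_on {-pi..pi} b"
  shows "\<bar>primitive h x\<bar> \<le> integral {-pi..x} b"
proof -
  have hh[measurable]: "h \<in> borel_measurable S1" using h by simp
  have bi: "integrable S1 b" by (rule integrable_S1_continuous_on[OF bc])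
  have "\<bar>primitive h x\<bar> = \<bar>\<integral>t. indicator {..x} t * h t \<partial>S1\<bar>" using primitive_eq_integral_indicator[OF h x] by simp
  also have "\<dots> \<le> (\<integral>t. \<bar>indicator {..x} t * h t\<bar> \<partial>S1)"
    by (rule integral_abs_bound)
  also have "\<dots> \<le> (\<integral>t. indicator {..x} t * b t \<partial>S1)"
    using integrable_S1_indicator_mult[OF h] integrable_S1_indicator_mult[OF bi] b
    by (intro integral_mono_AE) (auto simp: indicator_def elim!: eventually_mono)
  also have "\<dots> = primitive b x" using primitive_eq_integral_indicator[OF bi x] by simp
  finally show ?thesis unfolding primitive_def .
qed

lemma primitive_eq_integral_minus_tail:
  assumes h: "integrable S1 (h::real\<Rightarrow>real)" and x: "x \<in> {-pi..pi}"
  shows "primitive h x = (\<integral>t. h t \<partial>S1) - (\<integral>t. (if x \<le> t then h t else 0) \<partial>S1)"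
proof -
  have hm[measurable]: "h \<in> borel_measurable S1" using h by simp
  have i2: "integrable S1 (\<lambda>t. if x \<le> t then h t else 0)"
    by (rule integrable_S1_dominated[OF h]) auto
  have "(\<integral>t. indicator {..x} t * h t \<partial>S1) + (\<integral>t. (if x \<le> t then h t else 0) \<partial>S1)
        = (\<integral>t. indicator {..x} t * h t + (if x \<le> t then h t else 0) \<partial>S1)"
    using integrable_S1_indicator_mult[OF h] i2 by simp
  also have "\<dots> = (\<integral>t. h t \<partial>S1)"
    by (rule integral_cong_AE) (use AE_S1_neq[of x] in \<open>auto simp: indicator_def elim!: eventually_mono\<close>)
  finally show ?thesis using primitive_eq_integral_indicator[OF h x] by simp
qed

lemma integrable_S1_pair_tail_kernel:
  assumes g: "integrable S1 (g::real\<Rightarrow>real)" and h: "integrable S1 (h::real\<Rightarrow>real)"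
  defines "f \<equiv> \<lambda>x t. g x * (if x \<le> t then h t else 0)"
  shows "integrable (S1 \<Otimes>\<^sub>M S1) (case_prod f)"
proof (rule S1_pair.Fubini_integrable)
  have [measurable]: "g \<in> borel_measurable S1" "h \<in> borel_measurable S1" using g h by auto
  have fm[measurable]: "case_prod f \<in> borel_measurable (S1 \<Otimes>\<^sub>M S1)"
    unfolding f_def by measurable
  thus "case_prod f \<in> borel_measurable (S1 \<Otimes>\<^sub>M S1)" .
  have tail: "integrable S1 (\<lambda>t. if x \<le> t then h t else 0)" for x
    by (rule integrable_S1_dominated[OF h]) auto
  thus "AE x in S1. integrable S1 (\<lambda>t. case_prod f (x, t))"
    unfolding f_def by simp
  have tail_abs: "integrable S1 (\<lambda>t. if x \<le> t then \<bar>h t\<bar> else 0)" for x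
    by (rule integrable_S1_dominated[OF h]) auto
  have bound: "\<bar>\<integral>t. norm (case_prod f (x, t)) \<partial>S1\<bar> \<le> \<bar>g x * (\<integral>t. \<bar>h t\<bar> \<partial>S1)\<bar>" for x
  proof -
    have "(\<lambda>t. norm (case_prod f (x, t))) = (\<lambda>t. \<bar>g x\<bar> * (if x \<le> t then \<bar>h t\<bar> else 0))"
      by (auto simp: f_def abs_mult)
    hence "\<bar>\<integral>t. norm (case_prod f (x, t)) \<partial>S1\<bar>
        = \<bar>g x\<bar> * (\<integral>t. (if x \<le> t then \<bar>h t\<bar> else 0) \<partial>S1)"
      by (simp add: abs_mult)
    also have "\<dots> \<le> \<bar>g x\<bar> * (\<integral>t. \<bar>h t\<bar> \<partial>S1)"
      using tail_abs[of x] h by (intro mult_left_mono integral_mono) auto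
    finally show ?thesis by (simp add: abs_mult)
  qed
  show "integrable S1 (\<lambda>x. \<integral>t. norm (case_prod f (x, t)) \<partial>S1)"
  proof (rule integrable_S1_dominated[of "\<lambda>x. g x * (\<integral>t. \<bar>h t\<bar> \<partial>S1)"])
    show "integrable S1 (\<lambda>x. g x * (\<integral>t. \<bar>h t\<bar> \<partial>S1))" using g by simp
    show "(\<lambda>x. \<integral>t. norm (case_prod f (x, t)) \<partial>S1) \<in> borel_measurable S1"
      by measurable
    show "AE x in S1. \<bar>\<integral>t. norm (case_prod f (x, t)) \<partial>S1\<bar> \<le> \<bar>g x * (\<integral>t. \<bar>h t\<bar> \<partial>S1)\<bar>"
      using bound by (rule AE_I2)
  qed
qed

text \<open>Integration by parts on \<open>[-\<pi>,\<pi>]\<close>: both integrals on the left are the integrals of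
  \<open>g(x) h(t)\<close> over the two triangles \<open>x \<le> t\<close> and \<open>t \<le> x\<close> of the square (Fubini).\<close>
lemma integration_by_parts_primitive:
  assumes g: "integrable S1 (g::real\<Rightarrow>real)" and h: "integrable S1 (h::real\<Rightarrow>real)"
  shows "(\<integral>x. g x * primitive h x \<partial>S1) + (\<integral>x. primitive g x * h x \<partial>S1)
         = (\<integral>x. g x \<partial>S1) * (\<integral>x. h x \<partial>S1)"
proof -
  have [measurable]: "g \<in> borel_measurable S1" "h \<in> borel_measurable S1" using g h by auto
  define f where "f = (\<lambda>x t. g x * (if x \<le> t then h t else 0))"
  have [measurable]: "case_prod f \<in> borel_measurable (S1 \<Otimes>\<^sub>M S1)"
    unfolding f_def by measurable
  have int_f: "integrable (S1 \<Otimes>\<^sub>M S1) (case_prod f)"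
    unfolding f_def by (rule integrable_S1_pair_tail_kernel[OF g h])
  have fub: "(\<integral>t. (\<integral>x. f x t \<partial>S1) \<partial>S1) = (\<integral>x. (\<integral>t. f x t \<partial>S1) \<partial>S1)"
    by (rule S1_pair.Fubini_integral[OF int_f])
  have lhs1: "(\<integral>x. g x * primitive h x \<partial>S1)
        = (\<integral>x. g x * (\<integral>t. h t \<partial>S1) - (\<integral>t. f x t \<partial>S1) \<partial>S1)"
  proof (rule integral_cong_AE)
    show "AE x in S1. g x * primitive h x = g x * (\<integral>t. h t \<partial>S1) - (\<integral>t. f x t \<partial>S1)"
    proof (rule AE_S1_I)
      fix x assume x: "x \<in> {-pi..pi}"
      show "g x * primitive h x = g x * (\<integral>t. h t \<partial>S1) - (\<integral>t. f x t \<partial>S1)"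
        unfolding primitive_eq_integral_minus_tail[OF h x] f_def by (simp add: right_diff_distrib)
    qed
  qed (use h in auto)
  have ifx: "integrable S1 (\<lambda>x. \<integral>t. f x t \<partial>S1)"
    using S1_pair.integrable_fst'[OF int_f] by simp
  have rhs1: "(\<integral>x. primitive g x * h x \<partial>S1) = (\<integral>t. (\<integral>x. f x t \<partial>S1) \<partial>S1)"
  proof (rule integral_cong_AE)
    show "AE t in S1. primitive g t * h t = (\<integral>x. f x t \<partial>S1)"
    proof (rule AE_S1_I)
      fix t assume t: "t \<in> {-pi..pi}"
      have "(\<lambda>x. f x t) = (\<lambda>x. (indicator {..t} x * g x) * h t)"
        by (auto simp: f_def indicator_def)
      hence "(\<integral>x. f x t \<partial>S1) = (\<integral>x. indicator {..t} x * g x \<partial>S1) * h t"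
        by simp
      thus "primitive g t * h t = (\<integral>x. f x t \<partial>S1)"
        using primitive_eq_integral_indicator[OF g t] by simp
    qed
  qed (use g h in auto)
  have "(\<integral>x. g x * primitive h x \<partial>S1) + (\<integral>x. primitive g x * h x \<partial>S1)
      = (\<integral>x. g x * (\<integral>t. h t \<partial>S1) \<partial>S1) - (\<integral>x. (\<integral>t. f x t \<partial>S1) \<partial>S1)
        + (\<integral>x. (\<integral>t. f x t \<partial>S1) \<partial>S1)"
    unfolding lhs1 rhs1 fub using g ifx by simp
  also have "\<dots> = (\<integral>x. g x \<partial>S1) * (\<integral>x. h x \<partial>S1)" by simp
  finally show ?thesis .
qed

lemma smooth_periodicD:
  assumes "smooth_periodic \<phi>"
  shows "\<And>x. (\<phi> has_real_derivative deriv \<phi> x) (at x)"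
    and "continuous_on UNIV \<phi>" "continuous_on UNIV (deriv \<phi>)"
    and "\<phi> (x + 2*pi) = \<phi> x"
proof -
  have d0: "\<phi> differentiable_on UNIV" using assms unfolding smooth_periodic_def
    by (metis funpow_0)
  have "(deriv ^^ 1) \<phi> differentiable_on UNIV" using assms unfolding smooth_periodic_def
    by blast
  hence d1: "(deriv \<phi>) differentiable_on UNIV" by simp
  show "(\<phi> has_real_derivative deriv \<phi> x) (at x)" for x
    using d0 by (simp add: DERIV_deriv_iff_real_differentiable differentiable_on_def)
  show "continuous_on UNIV \<phi>" using d0 by (rule differentiable_imp_continuous_on)
  show "continuous_on UNIV (deriv \<phi>)" using d1 by (rule differentiable_imp_continuous_on)
  show "\<phi> (x + 2*pi) = \<phi> x" using assms unfolding smooth_periodic_def by auto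
qed

lemma primitive_deriv_smooth_periodic:
  assumes s: "smooth_periodic \<phi>" and x: "x \<in> {-pi..pi}"
  shows "primitive (deriv \<phi>) x = \<phi> x - \<phi> (-pi)"
proof -
  have "((deriv \<phi>) has_integral (\<phi> x - \<phi> (-pi))) {-pi..x}"
    using x smooth_periodicD(1)[OF s]
    by (intro fundamental_theorem_of_calculus)
       (auto simp: has_real_derivative_iff_has_vector_derivative[symmetric]
             intro: has_field_derivative_at_within)
  thus ?thesis unfolding primitive_def by (rule integral_unique)
qed

lemma smooth_periodic_integrable:
  assumes s: "smooth_periodic \<phi>"
  shows "integrable S1 (deriv \<phi>)" "integrable S1 \<phi>"
    "continuous_on {-pi..pi} \<phi>" "continuous_on {-pi..pi} (deriv \<phi>)"
proof -
  show c1: "continuous_on {-pi..pi} \<phi>" using smooth_periodicD(2)[OF s] continuous_on_subset by blast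
  show c2: "continuous_on {-pi..pi} (deriv \<phi>)" using smooth_periodicD(3)[OF s] continuous_on_subset by blast
  show "integrable S1 (deriv \<phi>)" by (rule integrable_S1_continuous_on[OF c2])
  show "integrable S1 \<phi>" by (rule integrable_S1_continuous_on[OF c1])
qed

lemma integral_deriv_smooth_periodic:
  assumes s: "smooth_periodic \<phi>"
  shows "(\<integral>x. deriv \<phi> x \<partial>S1) = 0"
proof -
  have "(\<integral>x. deriv \<phi> x \<partial>S1) = primitive (deriv \<phi>) pi"
    using primitive_right_end[OF smooth_periodic_integrable(1)[OF s]] by simp
  also have "\<dots> = \<phi> pi - \<phi> (-pi)" using primitive_deriv_smooth_periodic[OF s, of pi] by simp
  also have "\<phi> pi = \<phi> (-pi)" using smooth_periodicD(4)[OF s, of "-pi"] by simp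
  finally show ?thesis by simp
qed

lemma integral_primitive_mult_deriv:
  assumes g: "integrable S1 (g::real\<Rightarrow>real)" and g0: "(\<integral>x. g x \<partial>S1) = 0"
    and s: "smooth_periodic \<phi>"
  shows "(\<integral>x. primitive g x * deriv \<phi> x \<partial>S1) = - (\<integral>x. g x * \<phi> x \<partial>S1)"
proof -
  have di: "integrable S1 (deriv \<phi>)" by (rule smooth_periodic_integrable(1)[OF s])
  have pl: "(\<integral>x. g x * primitive (deriv \<phi>) x \<partial>S1) + (\<integral>x. primitive g x * deriv \<phi> x \<partial>S1) = 0"
    using integration_by_parts_primitive[OF g di] g0 by simp
  have "(\<integral>x. g x * primitive (deriv \<phi>) x \<partial>S1) = (\<integral>x. g x * \<phi> x - \<phi> (-pi) * g x \<partial>S1)"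
    by (rule Bochner_Integration.integral_cong) (auto simp: primitive_deriv_smooth_periodic[OF s] algebra_simps)
  also have "\<dots> = (\<integral>x. g x * \<phi> x \<partial>S1)"
    using integrable_S1_mult_continuous_on[OF g smooth_periodic_integrable(3)[OF s]] g g0 by simp
  finally show ?thesis using pl by linarith
qed

lemma weak_deriv_primitive:
  assumes g: "integrable S1 (g::real\<Rightarrow>real)" and g0: "(\<integral>x. g x \<partial>S1) = 0"
    and F: "\<And>x. x \<in> {-pi..pi} \<Longrightarrow> F x = c + primitive g x"
  shows "weak_deriv F g"
  unfolding weak_deriv_def
proof (intro allI impI)
  fix \<phi> assume s: "smooth_periodic \<phi>"
  have di: "integrable S1 (deriv \<phi>)" by (rule smooth_periodic_integrable(1)[OF s])
  have pg: "integrable S1 (\<lambda>x. primitive g x * deriv \<phi> x)"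
    using integrable_S1_mult_continuous_on[OF di continuous_on_primitive[OF g]]
    by (simp add: mult.commute)
  have "(\<integral>x. F x * deriv \<phi> x \<partial>S1) = (\<integral>x. c * deriv \<phi> x + primitive g x * deriv \<phi> x \<partial>S1)"
    by (rule Bochner_Integration.integral_cong) (auto simp: F algebra_simps)
  also have "\<dots> = c * (\<integral>x. deriv \<phi> x \<partial>S1) + (\<integral>x. primitive g x * deriv \<phi> x \<partial>S1)"
    using di pg by simp
  also have "\<dots> = - (\<integral>x. g x * \<phi> x \<partial>S1)"
    using integral_deriv_smooth_periodic[OF s] integral_primitive_mult_deriv[OF g g0 s] by simp
  finally show "(\<integral>x. F x * deriv \<phi> x \<partial>S1) = - (\<integral>x. g x * \<phi> x \<partial>S1)" .
qed

section \<open>Trigonometric polynomials and the du Bois-Reymond lemma\<close>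

inductive trig_poly :: "(real \<Rightarrow> real) \<Rightarrow> bool" where
  const: "trig_poly (\<lambda>x. c)"
| cos: "trig_poly cos"
| sin: "trig_poly sin"
| add: "trig_poly f \<Longrightarrow> trig_poly g \<Longrightarrow> trig_poly (\<lambda>x. f x + g x)"
| mult: "trig_poly f \<Longrightarrow> trig_poly g \<Longrightarrow> trig_poly (\<lambda>x. f x * g x)"

lemma trig_poly_has_derivative: "trig_poly f \<Longrightarrow> \<exists>f'. trig_poly f' \<and> (\<forall>x. (f has_real_derivative f' x) (at x))"
proof (induction rule: trig_poly.induct)
  case (const c) thus ?case by (intro exI[of _ "\<lambda>x. 0"]) (auto intro: trig_poly.const)
next
  case cos
  have "trig_poly (\<lambda>x. (-1) * sin x)" by (intro trig_poly.intros)
  thus ?case by (intro exI[of _ "\<lambda>x. (-1) * sin x"]) (auto intro!: derivative_eq_intros)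
next
  case sin thus ?case by (intro exI[of _ cos]) (auto intro!: derivative_eq_intros trig_poly.intros)
next
  case (add f g)
  then obtain f' g' where "trig_poly f'" "\<forall>x. (f has_real_derivative f' x) (at x)"
    "trig_poly g'" "\<forall>x. (g has_real_derivative g' x) (at x)" by blast
  thus ?case by (intro exI[of _ "\<lambda>x. f' x + g' x"]) (auto intro!: derivative_eq_intros trig_poly.intros)
next
  case (mult f g)
  then obtain f' g' where a: "trig_poly f'" "\<forall>x. (f has_real_derivative f' x) (at x)"
    "trig_poly g'" "\<forall>x. (g has_real_derivative g' x) (at x)" by blast
  have "trig_poly (\<lambda>x. f' x * g x + f x * g' x)" using a mult by (intro trig_poly.intros) auto
  thus ?case using a by (intro exI[of _ "\<lambda>x. f' x * g x + f x * g' x"]) (auto intro!: derivative_eq_intros)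
qed

lemma trig_poly_deriv: "trig_poly f \<Longrightarrow> trig_poly (deriv f) \<and> (\<forall>x. (f has_real_derivative deriv f x) (at x))"
proof -
  assume "trig_poly f"
  then obtain f' where a: "trig_poly f'" "\<forall>x. (f has_real_derivative f' x) (at x)"
    using trig_poly_has_derivative by blast
  hence "deriv f = f'" by (intro ext DERIV_imp_deriv) auto
  thus ?thesis using a by simp
qed

lemma trig_poly_periodic: "trig_poly f \<Longrightarrow> f (x + 2*pi) = f x"
  by (induction rule: trig_poly.induct) auto

lemma trig_poly_funpow_deriv: "trig_poly f \<Longrightarrow> trig_poly ((deriv ^^ n) f)"
  by (induction n) (auto dest: trig_poly_deriv)

lemma trig_poly_smooth_periodic: "trig_poly f \<Longrightarrow> smooth_periodic f"
  unfolding smooth_periodic_def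
proof (intro conjI allI)
  fix n x assume t: "trig_poly f"
  have "trig_poly ((deriv ^^ n) f)" using trig_poly_funpow_deriv[OF t] .
  hence "\<forall>x. ((deriv ^^ n) f has_real_derivative deriv ((deriv ^^ n) f) x) (at x)"
    using trig_poly_deriv by blast
  thus "(deriv ^^ n) f differentiable_on UNIV"
    by (auto simp: differentiable_on_def real_differentiable_def intro: has_field_derivative_at_within)
  show "f (x + 2*pi) = f x" using trig_poly_periodic[OF t] .
qed

lemma continuous_on_trig_poly: "trig_poly f \<Longrightarrow> continuous_on UNIV f"
  using smooth_periodicD(2)[OF trig_poly_smooth_periodic] .

lemma trig_poly_polynomial_function:
  fixes q :: "real \<times> real \<Rightarrow> real"
  assumes "real_polynomial_function q"
  shows "trig_poly (\<lambda>t. q (cos t, sin t))"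
  using assms
proof (induction rule: real_polynomial_function.induct)
  case (linear f)
  have l: "linear f" using linear by (rule bounded_linear.linear)
  have fab: "f (a, b) = a * f (1,0) + b * f (0,1)" for a b
  proof -
    have "f (a, b) = f ((a,0) + (0,b))" by simp
    also have "\<dots> = f (a,0) + f (0,b)" by (rule linear_add[OF l])
    also have "(a,0) = a *\<^sub>R (1::real, 0::real)" by simp
    also have "(0,b) = b *\<^sub>R (0::real, 1::real)" by simp
    finally show ?thesis by (simp only: linear_scale[OF l] real_scaleR_def)
  qed
  have "trig_poly (\<lambda>t. cos t * f (1,0) + sin t * f (0,1))"
    by (intro trig_poly.intros)
  moreover have "(\<lambda>t. f (cos t, sin t)) = (\<lambda>t. cos t * f (1,0) + sin t * f (0,1))"
    by (rule ext, rule fab)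
  ultimately show ?case by simp
next
  case (const c) thus ?case by (rule trig_poly.const)
next
  case (add f g) thus ?case by (intro trig_poly.intros)
next
  case (mult f g) thus ?case by (intro trig_poly.intros)
qed

definition circle_point :: "real \<Rightarrow> real \<times> real" where "circle_point t = (cos t, sin t)"

lemma continuous_on_circle_point: "continuous_on A circle_point"
  unfolding circle_point_def by (intro continuous_intros)

lemma abs_integral_mult_continuous_circle_le:
  fixes \<kappa> :: "real \<Rightarrow> real"
  assumes k: "integrable S1 \<kappa>" and z: "\<And>T. trig_poly T \<Longrightarrow> (\<integral>t. \<kappa> t * T t \<partial>S1) = 0"
    and F: "continuous_on UNIV F" and e: "e > 0"
  shows "\<bar>\<integral>t. \<kappa> t * F (circle_point t) \<partial>S1\<bar> \<le> e * (\<integral>t. \<bar>\<kappa> t\<bar> \<partial>S1)"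
proof -
  define C where "C = circle_point ` {-pi..pi}"
  have C: "compact C" unfolding C_def by (intro compact_continuous_image continuous_on_circle_point compact_Icc)
  have Fc: "continuous_on C F" using F continuous_on_subset by blast
  have Fcirc: "continuous_on {-pi..pi} (\<lambda>t. F (circle_point t))"
    by (intro continuous_on_compose2[OF F continuous_on_circle_point]) auto
  have iF: "integrable S1 (\<lambda>t. \<kappa> t * F (circle_point t))"
    by (rule integrable_S1_mult_continuous_on[OF k Fcirc])
  obtain q where q: "real_polynomial_function q" "\<And>y. y \<in> C \<Longrightarrow> \<bar>F y - q y\<bar> < e"
    using Stone_Weierstrass_real_polynomial_function[OF C Fc e] by blast
  have tq: "trig_poly (\<lambda>t. q (circle_point t))" using trig_poly_polynomial_function[OF q(1)] unfolding circle_point_def .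
  have iq: "integrable S1 (\<lambda>t. \<kappa> t * q (circle_point t))"
    by (rule integrable_S1_mult_continuous_on[OF k]) (use continuous_on_trig_poly[OF tq] continuous_on_subset in blast)
  have "(\<integral>t. \<kappa> t * F (circle_point t) \<partial>S1) = (\<integral>t. \<kappa> t * F (circle_point t) \<partial>S1) - (\<integral>t. \<kappa> t * q (circle_point t) \<partial>S1)"
    using z[OF tq] by simp
  also have "\<dots> = (\<integral>t. \<kappa> t * (F (circle_point t) - q (circle_point t)) \<partial>S1)"
    using iF iq by (simp add: right_diff_distrib)
  finally have eq: "(\<integral>t. \<kappa> t * F (circle_point t) \<partial>S1) = (\<integral>t. \<kappa> t * (F (circle_point t) - q (circle_point t)) \<partial>S1)" .
  have "\<bar>\<integral>t. \<kappa> t * (F (circle_point t) - q (circle_point t)) \<partial>S1\<bar> \<le> (\<integral>t. \<bar>\<kappa> t * (F (circle_point t) - q (circle_point t))\<bar> \<partial>S1)"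
    by (rule integral_abs_bound)
  also have "\<dots> \<le> (\<integral>t. e * \<bar>\<kappa> t\<bar> \<partial>S1)"
  proof (rule integral_mono_AE)
    show "integrable S1 (\<lambda>t. \<bar>\<kappa> t * (F (circle_point t) - q (circle_point t))\<bar>)"
      using iF iq by (intro integrable_abs) (simp add: right_diff_distrib)
    show "integrable S1 (\<lambda>t. e * \<bar>\<kappa> t\<bar>)" using k by simp
    show "AE t in S1. \<bar>\<kappa> t * (F (circle_point t) - q (circle_point t))\<bar> \<le> e * \<bar>\<kappa> t\<bar>"
    proof (rule AE_S1_I)
      fix t assume t: "t \<in> {-pi..pi}"
      have "circle_point t \<in> C" unfolding C_def using t by auto
      hence "\<bar>F (circle_point t) - q (circle_point t)\<bar> \<le> e" using q(2) by (simp add: less_imp_le)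
      hence "\<bar>\<kappa> t\<bar> * \<bar>F (circle_point t) - q (circle_point t)\<bar> \<le> \<bar>\<kappa> t\<bar> * e"
        by (rule mult_left_mono) auto
      thus "\<bar>\<kappa> t * (F (circle_point t) - q (circle_point t))\<bar> \<le> e * \<bar>\<kappa> t\<bar>"
        by (simp add: abs_mult mult.commute)
    qed
  qed
  also have "\<dots> = e * (\<integral>t. \<bar>\<kappa> t\<bar> \<partial>S1)" by simp
  finally show ?thesis using eq by simp
qed

lemma integral_mult_continuous_circle_eq_0:
  fixes \<kappa> :: "real \<Rightarrow> real"
  assumes k: "integrable S1 \<kappa>" and z: "\<And>T. trig_poly T \<Longrightarrow> (\<integral>t. \<kappa> t * T t \<partial>S1) = 0"
    and F: "continuous_on UNIV F"
  shows "(\<integral>t. \<kappa> t * F (circle_point t) \<partial>S1) = 0"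
proof -
  note le = abs_integral_mult_continuous_circle_le[OF k z F]
  define K where "K = (\<integral>t. \<bar>\<kappa> t\<bar> \<partial>S1)"
  have K: "K \<ge> 0" unfolding K_def by simp
  have "\<bar>\<integral>t. \<kappa> t * F (circle_point t) \<partial>S1\<bar> \<le> 0 + e" if e: "e > 0" for e
  proof -
    have "\<bar>\<integral>t. \<kappa> t * F (circle_point t) \<partial>S1\<bar> \<le> e / (K + 1) * K"
      using le[of "e / (K + 1)"] e K unfolding K_def by simp
    also have "\<dots> \<le> e" using e K by (simp add: field_simps)
    finally show ?thesis by simp
  qed
  hence "\<bar>\<integral>t. \<kappa> t * F (circle_point t) \<partial>S1\<bar> \<le> 0" by (rule field_le_epsilon)
  thus ?thesis by simp
qed

definition ramp :: "real \<Rightarrow> real" where "ramp s = min 1 (max 0 s)"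

lemma continuous_on_ramp: "continuous_on A (\<lambda>y. ramp (f y))" if "continuous_on A f"
  unfolding ramp_def using that by (intro continuous_intros)

lemma ramp_bounds: "0 \<le> ramp s" "ramp s \<le> 1"
  unfolding ramp_def by auto

lemma ramp_scaled_tendsto: "(\<lambda>n. ramp (real n * s)) \<longlonglongrightarrow> (if s > 0 then 1 else 0)"
proof (cases "s > 0")
  case True
  obtain N :: nat where N: "real N > 1 / s" using reals_Archimedean2 by blast
  have "\<forall>n\<ge>N. ramp (real n * s) = 1"
  proof (intro allI impI)
    fix n assume "N \<le> n"
    hence "real n > 1 / s" using N by (meson le_less_trans of_nat_le_iff not_le)
    hence "real n * s > 1" using True by (simp add: divide_less_eq)
    thus "ramp (real n * s) = 1" unfolding ramp_def by simp
  qed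
  hence "eventually (\<lambda>n. ramp (real n * s) = 1) sequentially" by (auto simp: eventually_sequentially)
  thus ?thesis using True by (simp add: tendsto_eventually)
next
  case False
  hence "ramp (real n * s) = 0" for n unfolding ramp_def
    by (simp add: mult_nonneg_nonpos)
  thus ?thesis using False by simp
qed

lemma integral_mult_indicator_positive_eq_0:
  fixes \<kappa> :: "real \<Rightarrow> real" and a b :: "real \<times> real \<Rightarrow> real"
  assumes k: "integrable S1 \<kappa>" and z: "\<And>T. trig_poly T \<Longrightarrow> (\<integral>t. \<kappa> t * T t \<partial>S1) = 0"
    and a: "continuous_on UNIV a" and b: "continuous_on UNIV b"
  shows "(\<integral>t. \<kappa> t * (if a (circle_point t) > 0 \<and> b (circle_point t) > 0 then 1 else 0) \<partial>S1) = 0"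
proof -
  have km[measurable]: "\<kappa> \<in> borel_measurable S1" using k by simp
  have am[measurable]: "a \<in> borel_measurable borel" using a by (rule borel_measurable_continuous_onI)
  have bm[measurable]: "b \<in> borel_measurable borel" using b by (rule borel_measurable_continuous_onI)
  have cm[measurable]: "circle_point \<in> borel_measurable S1"
    unfolding circle_point_def by measurable
  define s where "s = (\<lambda>(n::nat) t. \<kappa> t * (ramp (real n * a (circle_point t)) * ramp (real n * b (circle_point t))))"
  have Fn: "continuous_on UNIV (\<lambda>y. ramp (real n * a y) * ramp (real n * b y))" for n
    by (intro continuous_intros continuous_on_ramp a b)
  have s0: "(\<integral>t. s n t \<partial>S1) = 0" for n
    unfolding s_def using integral_mult_continuous_circle_eq_0[OF k z Fn[of n]] by simp
  have "(\<lambda>n. (\<integral>t. s n t \<partial>S1)) \<longlonglongrightarrow> (\<integral>t. \<kappa> t * (if a (circle_point t) > 0 \<and> b (circle_point t) > 0 then 1 else 0) \<partial>S1)"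
  proof (rule integral_dominated_convergence[where w="\<lambda>t. \<bar>\<kappa> t\<bar>"])
    show "(\<lambda>t. \<kappa> t * (if a (circle_point t) > 0 \<and> b (circle_point t) > 0 then 1 else 0)) \<in> borel_measurable S1"
      by measurable
    show "s n \<in> borel_measurable S1" for n unfolding s_def ramp_def by measurable
    show "integrable S1 (\<lambda>t. \<bar>\<kappa> t\<bar>)" using k by simp
    show "AE t in S1. (\<lambda>n. s n t) \<longlonglongrightarrow> \<kappa> t * (if a (circle_point t) > 0 \<and> b (circle_point t) > 0 then 1 else 0)"
    proof (rule AE_I2)
      fix t
      have "(\<lambda>n. \<kappa> t * (ramp (real n * a (circle_point t)) * ramp (real n * b (circle_point t))))
             \<longlonglongrightarrow> \<kappa> t * ((if a (circle_point t) > 0 then 1 else 0) * (if b (circle_point t) > 0 then 1 else 0))"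
        by (intro tendsto_mult tendsto_const ramp_scaled_tendsto)
      thus "(\<lambda>n. s n t) \<longlonglongrightarrow> \<kappa> t * (if a (circle_point t) > 0 \<and> b (circle_point t) > 0 then 1 else 0)"
        unfolding s_def by (simp split: if_splits)
    qed
    show "AE t in S1. norm (s n t) \<le> \<bar>\<kappa> t\<bar>" for n
    proof (rule AE_I2)
      fix t
      define c1 where "c1 = ramp (real n * a (circle_point t))"
      define c2 where "c2 = ramp (real n * b (circle_point t))"
      have "0 \<le> c1" "c1 \<le> 1" "0 \<le> c2" "c2 \<le> 1" unfolding c1_def c2_def by (rule ramp_bounds)+
      hence "c1 * c2 \<le> 1 * 1" by (intro mult_mono) auto
      hence c: "\<bar>c1 * c2\<bar> \<le> 1" using \<open>0 \<le> c1\<close> \<open>0 \<le> c2\<close> by simp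
      have "norm (s n t) = \<bar>\<kappa> t\<bar> * \<bar>c1 * c2\<bar>" unfolding s_def c1_def c2_def by (simp add: abs_mult)
      also have "\<dots> \<le> \<bar>\<kappa> t\<bar> * 1" using c by (intro mult_left_mono) auto
      finally show "norm (s n t) \<le> \<bar>\<kappa> t\<bar>" by simp
    qed
  qed
  hence "(\<lambda>n. 0::real) \<longlonglongrightarrow> (\<integral>t. \<kappa> t * (if a (circle_point t) > 0 \<and> b (circle_point t) > 0 then 1 else 0) \<partial>S1)"
    using s0 by simp
  thus ?thesis by (simp add: LIMSEQ_const_iff)
qed

text \<open>A finite signed measure on the real line is determined by its values on the half-lines
  \<open>{x<..}\<close>; we compare the densities of the positive and negative parts of \<open>g\<close>.\<close>
lemma AE_lborel_zero_if_integrals_greaterThan_zero: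
  fixes g :: "real \<Rightarrow> real"
  assumes gm[measurable]: "g \<in> borel_measurable lborel" and gi: "integrable lborel g"
    and gup: "\<And>x. (\<integral>y. g y * indicator {x<..} y \<partial>lborel) = 0"
  shows "AE y in lborel. g y = 0"
proof -
  have gp: "integrable lborel (\<lambda>y. max 0 (g y) * indicator A y)" if A[measurable]: "A \<in> sets borel" for A
    by (rule Bochner_Integration.integrable_bound[OF gi]) (auto simp: indicator_def)
  have gn: "integrable lborel (\<lambda>y. max 0 (- g y) * indicator A y)" if A[measurable]: "A \<in> sets borel" for A
    by (rule Bochner_Integration.integrable_bound[OF gi]) (auto simp: indicator_def)
  define N1 where "N1 = density lborel (\<lambda>y. ennreal (g y))"
  define N2 where "N2 = density lborel (\<lambda>y. ennreal (- g y))"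
  have en: "ennreal r * indicator A y = ennreal (max 0 r * indicator A y)" for r A and y :: real
    by (cases "r \<ge> 0") (auto simp: indicator_def ennreal_neg)
  have e1: "emeasure N1 A = ennreal (\<integral>y. max 0 (g y) * indicator A y \<partial>lborel)" if "A \<in> sets borel" for A
  proof -
    have "emeasure N1 A = (\<integral>\<^sup>+ y. ennreal (g y) * indicator A y \<partial>lborel)"
      unfolding N1_def using that by (subst emeasure_density) auto
    also have "\<dots> = (\<integral>\<^sup>+ y. ennreal (max 0 (g y) * indicator A y) \<partial>lborel)" by (simp add: en)
    also have "\<dots> = ennreal (\<integral>y. max 0 (g y) * indicator A y \<partial>lborel)"
      by (rule nn_integral_eq_integral[OF gp[OF that]]) auto
    finally show ?thesis .
  qed
  have e2: "emeasure N2 A = ennreal (\<integral>y. max 0 (- g y) * indicator A y \<partial>lborel)" if "A \<in> sets borel" for A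
  proof -
    have "emeasure N2 A = (\<integral>\<^sup>+ y. ennreal (- g y) * indicator A y \<partial>lborel)"
      unfolding N2_def using that by (subst emeasure_density) auto
    also have "\<dots> = (\<integral>\<^sup>+ y. ennreal (max 0 (- g y) * indicator A y) \<partial>lborel)" by (simp add: en)
    also have "\<dots> = ennreal (\<integral>y. max 0 (- g y) * indicator A y \<partial>lborel)"
      by (rule nn_integral_eq_integral[OF gn[OF that]]) auto
    finally show ?thesis .
  qed
  have "N1 = N2"
  proof (rule measure_eqI_lessThan)
    show "sets N1 = sets borel" "sets N2 = sets borel" unfolding N1_def N2_def by auto
    show "emeasure N1 {x<..} < \<infinity>" for x using e1[of "{x<..}"] by simp
    show "emeasure N1 {x<..} = emeasure N2 {x<..}" for x
    proof -
      have "(\<integral>y. max 0 (g y) * indicator {x<..} y \<partial>lborel) - (\<integral>y. max 0 (- g y) * indicator {x<..} y \<partial>lborel)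
          = (\<integral>y. max 0 (g y) * indicator {x<..} y - max 0 (- g y) * indicator {x<..} y \<partial>lborel)"
        by (rule Bochner_Integration.integral_diff[symmetric]) (use gp[of "{x<..}"] gn[of "{x<..}"] in auto)
      also have "\<dots> = (\<integral>y. g y * indicator {x<..} y \<partial>lborel)"
        by (rule Bochner_Integration.integral_cong) (auto simp: indicator_def)
      finally have "(\<integral>y. max 0 (g y) * indicator {x<..} y \<partial>lborel) - (\<integral>y. max 0 (- g y) * indicator {x<..} y \<partial>lborel)
          = (\<integral>y. g y * indicator {x<..} y \<partial>lborel)" .
      hence "(\<integral>y. max 0 (g y) * indicator {x<..} y \<partial>lborel) = (\<integral>y. max 0 (- g y) * indicator {x<..} y \<partial>lborel)"
        using gup[of x] by simp
      thus ?thesis using e1[of "{x<..}"] e2[of "{x<..}"] by simp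
    qed
  qed
  have fin: "integral\<^sup>N lborel (\<lambda>y. ennreal (g y)) \<noteq> \<infinity>"
  proof -
    have "integral\<^sup>N lborel (\<lambda>y. ennreal (g y)) = emeasure N1 UNIV"
      unfolding N1_def by (subst emeasure_density) auto
    thus ?thesis using e1[of UNIV] by simp
  qed
  have "AE y in lborel. ennreal (g y) = ennreal (- g y)"
    using finite_density_unique[of "\<lambda>y. ennreal (g y)" lborel "\<lambda>y. ennreal (- g y)"] fin \<open>N1 = N2\<close>
    unfolding N1_def N2_def by auto
  then show ?thesis
  proof (elim eventually_mono)
    fix y assume e: "ennreal (g y) = ennreal (- g y)"
    show "g y = 0"
    proof (rule ccontr)
      assume "g y \<noteq> 0"
      hence "g y > 0 \<or> g y < 0" by auto
      thus False using e by (auto simp: ennreal_neg)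
    qed
  qed
qed

lemma integrals_greaterThan_zero_if_integrals_atMost_zero:
  fixes \<kappa> :: "real \<Rightarrow> real"
  assumes k: "integrable S1 \<kappa>"
    and z: "\<And>x. x \<in> {-pi..pi} \<Longrightarrow> (\<integral>t. indicator {..x} t * \<kappa> t \<partial>S1) = 0"
  shows "(\<integral>t. \<kappa> t * indicator {x<..} t \<partial>S1) = 0"
proof -
  have km[measurable]: "\<kappa> \<in> borel_measurable S1" using k by simp
  have int0: "(\<integral>t. \<kappa> t \<partial>S1) = 0"
  proof -
    have "(\<integral>t. \<kappa> t \<partial>S1) = (\<integral>t. indicator {..pi} t * \<kappa> t \<partial>S1)"
      by (rule Bochner_Integration.integral_cong) auto
    thus ?thesis using z[of pi] by simp
  qed
  show ?thesis
  proof (cases "x < -pi")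
    case True
    have "(\<integral>t. \<kappa> t * indicator {x<..} t \<partial>S1) = (\<integral>t. \<kappa> t \<partial>S1)"
      by (rule Bochner_Integration.integral_cong) (use True in auto)
    thus ?thesis using int0 by simp
  next
    case False
    show ?thesis
    proof (cases "x > pi")
      case True
      have "(\<integral>t. \<kappa> t * indicator {x<..} t \<partial>S1) = (\<integral>t. 0 \<partial>S1)"
        by (rule Bochner_Integration.integral_cong) (use True in auto)
      thus ?thesis by simp
    next
      case False2: False
      hence x: "x \<in> {-pi..pi}" using False by auto
      have "(\<integral>t. \<kappa> t * indicator {x<..} t \<partial>S1) = (\<integral>t. \<kappa> t - indicator {..x} t * \<kappa> t \<partial>S1)"
        by (rule Bochner_Integration.integral_cong) (auto simp: indicator_def)
      also have "\<dots> = 0" using int0 z[OF x] integrable_S1_indicator_mult[OF k] k by simp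
      finally show ?thesis .
    qed
  qed
qed

lemma AE_S1_zero_if_integrals_atMost_zero:
  fixes \<kappa> :: "real \<Rightarrow> real"
  assumes k: "integrable S1 \<kappa>"
    and z: "\<And>x. x \<in> {-pi..pi} \<Longrightarrow> (\<integral>t. indicator {..x} t * \<kappa> t \<partial>S1) = 0"
  shows "AE t in S1. \<kappa> t = 0"
proof -
  have km[measurable]: "\<kappa> \<in> borel_measurable S1" using k by simp
  note up = integrals_greaterThan_zero_if_integrals_atMost_zero[OF k z]
  define \<kappa>' where "\<kappa>' = (\<lambda>t. indicator {-pi..pi} t * \<kappa> t)"
  have i': "integrable lebesgue \<kappa>'"
    using k unfolding \<kappa>'_def by (subst (asm) integrable_restrict_space) auto
  have "\<kappa>' \<in> borel_measurable (completion lborel)" using i' by simp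
  then obtain g where gm[measurable]: "g \<in> borel_measurable lborel" and ge: "AE x in lborel. \<kappa>' x = g x"
    using completion_ex_borel_measurable_real by blast
  have gmc: "g \<in> borel_measurable (completion lborel)"
    using gm by (rule measurable_completion)
  have gec: "AE x in completion lborel. \<kappa>' x = g x" using ge by (rule AE_completion)
  have gic: "integrable (completion lborel) g"
    using i' gmc gec by (rule integrable_cong_AE_imp)
  have gi: "integrable lborel g" using gic integrable_completion[OF gm] by simp
  have gup: "(\<integral>y. g y * indicator {x<..} y \<partial>lborel) = 0" for x
  proof -
    have "(\<integral>y. g y * indicator {x<..} y \<partial>lborel) = (\<integral>y. g y * indicator {x<..} y \<partial>completion lborel)"
      by (rule integral_completion[symmetric]) simp
    also have "\<dots> = (\<integral>y. \<kappa>' y * indicator {x<..} y \<partial>completion lborel)"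
    proof (rule integral_cong_AE)
      have [measurable]: "g \<in> borel_measurable lebesgue" using gmc .
      have [measurable]: "\<kappa>' \<in> borel_measurable lebesgue" using i' by simp
      have ind: "(indicator {x<..} :: real \<Rightarrow> real) \<in> borel_measurable (completion lborel)"
        by (rule measurable_completion) simp
      show "(\<lambda>y. g y * indicator {x<..} y) \<in> borel_measurable (completion lborel)"
        by (intro borel_measurable_times) (use gmc ind in auto)
      show "(\<lambda>y. \<kappa>' y * indicator {x<..} y) \<in> borel_measurable (completion lborel)"
        by (intro borel_measurable_times) (use i' ind in auto)
      show "AE y in completion lborel. g y * indicator {x<..} y = \<kappa>' y * indicator {x<..} y"
        using gec by (auto elim!: eventually_mono)
    qed
    also have "\<dots> = (\<integral>y. \<kappa> y * indicator {x<..} y \<partial>S1)"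
      by (subst integral_restrict_space) (auto simp: \<kappa>'_def mult.assoc)
    finally show ?thesis using up by simp
  qed
  have "AE y in lborel. g y = 0"
    by (rule AE_lborel_zero_if_integrals_greaterThan_zero[OF gm gi gup])
  hence "AE y in lborel. \<kappa>' y = 0" using ge by eventually_elim auto
  hence "AE y in completion lborel. \<kappa>' y = 0" by (rule AE_completion)
  thus ?thesis
    by (subst AE_restrict_space_iff) (auto simp: \<kappa>'_def elim!: eventually_mono)
qed

lemma sin_pos_imp_in_upper_half: "t \<in> {-pi..pi} \<Longrightarrow> sin t > 0 \<Longrightarrow> 0 < t \<and> t < pi"
proof -
  assume t: "t \<in> {-pi..pi}" and s: "sin t > 0"
  have "t > 0"
  proof (rule ccontr)
    assume "\<not> t > 0"
    hence "0 \<le> sin (-t)" using t by (intro sin_ge_zero) auto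
    thus False using s by simp
  qed
  moreover have "t \<noteq> pi" using s by auto
  ultimately show ?thesis using t by auto
qed

lemma sin_neg_imp_in_lower_half: "t \<in> {-pi..pi} \<Longrightarrow> sin t < 0 \<Longrightarrow> -pi < t \<and> t < 0"
proof -
  assume t: "t \<in> {-pi..pi}" and s: "sin t < 0"
  have "t < 0"
  proof (rule ccontr)
    assume "\<not> t < 0"
    hence "0 \<le> sin t" using t by (intro sin_ge_zero) auto
    thus False using s by simp
  qed
  moreover have "t \<noteq> -pi" using s by auto
  ultimately show ?thesis using t by auto
qed

lemma atMost_iff_upper_arc:
  assumes x: "0 \<le> x" "x < pi" and t: "t \<in> {-pi..pi}" "t \<noteq> pi"
  shows "t \<le> x \<longleftrightarrow> \<not> (cos x - cos t > 0 \<and> sin t > 0)"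
proof
  assume "t \<le> x"
  show "\<not> (cos x - cos t > 0 \<and> sin t > 0)"
  proof
    assume c: "cos x - cos t > 0 \<and> sin t > 0"
    hence "0 < t \<and> t < pi" using sin_pos_imp_in_upper_half t by auto
    hence "x < t" using c x cos_mono_less_eq[of t x] by auto
    thus False using \<open>t \<le> x\<close> by simp
  qed
next
  assume c: "\<not> (cos x - cos t > 0 \<and> sin t > 0)"
  show "t \<le> x"
  proof (rule ccontr)
    assume "\<not> t \<le> x"
    hence "0 < t" "t < pi" using x t by auto
    hence "sin t > 0" by (intro sin_gt_zero)
    moreover have "cos t < cos x" using \<open>0 < t\<close> \<open>t < pi\<close> x \<open>\<not> t \<le> x\<close> cos_mono_less_eq[of t x] by auto
    ultimately show False using c by simp
  qed
qed

lemma atMost_iff_lower_arc: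
  assumes x: "-pi < x" "x < 0" and t: "t \<in> {-pi..pi}" "t \<noteq> -pi" "t \<noteq> x"
  shows "t \<le> x \<longleftrightarrow> cos x - cos t > 0 \<and> - sin t > 0"
proof
  assume "t \<le> x"
  hence "-pi < t" "t < 0" "t < x" using x t by auto
  hence "sin (-t) > 0" by (intro sin_gt_zero) auto
  moreover have "cos (-t) < cos (-x)"
    using \<open>-pi < t\<close> \<open>t < x\<close> x cos_mono_less_eq[of "-t" "-x"] by auto
  ultimately show "cos x - cos t > 0 \<and> - sin t > 0" by simp
next
  assume c: "cos x - cos t > 0 \<and> - sin t > 0"
  hence "-pi < t \<and> t < 0" using sin_neg_imp_in_lower_half t by auto
  hence "cos (-t) < cos (-x) \<longleftrightarrow> -x < -t" using x cos_mono_less_eq[of "-t" "-x"] by auto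
  thus "t \<le> x" using c by auto
qed

lemma integral_atMost_eq_0_if_orthogonal_trig_poly:
  fixes \<kappa> :: "real \<Rightarrow> real"
  assumes k: "integrable S1 \<kappa>" and z: "\<And>T. trig_poly T \<Longrightarrow> (\<integral>t. \<kappa> t * T t \<partial>S1) = 0"
    and x: "x \<in> {-pi..pi}"
  shows "(\<integral>t. indicator {..x} t * \<kappa> t \<partial>S1) = 0"
proof -
  have km[measurable]: "\<kappa> \<in> borel_measurable S1" using k by simp
  have int0: "(\<integral>t. \<kappa> t \<partial>S1) = 0" using z[OF trig_poly.const[of 1]] by simp
  have ai: "integrable S1 (\<lambda>t. \<kappa> t * (if P t then 1 else 0))" if [measurable]: "Measurable.pred S1 P" for P
    by (rule integrable_S1_dominated[OF k]) auto
  consider "x = pi" | "x = -pi" | "0 \<le> x" "x < pi" | "-pi < x" "x < 0" using x by fastforce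
  thus ?thesis
  proof cases
    case 1
    have "(\<integral>t. indicator {..x} t * \<kappa> t \<partial>S1) = (\<integral>t. \<kappa> t \<partial>S1)"
      by (rule Bochner_Integration.integral_cong) (use 1 in auto)
    thus ?thesis using int0 by simp
  next
    case 2
    have ae: "AE t in S1. indicator {..x} t * \<kappa> t = 0"
    proof (rule eventually_mono[OF eventually_conj[OF AE_S1_neq[of "-pi"] AE_space]])
      fix t assume "t \<noteq> -pi \<and> t \<in> space S1"
      thus "indicator {..x} t * \<kappa> t = 0" using 2 by (auto simp: indicator_def)
    qed
    have "(\<integral>t. indicator {..x} t * \<kappa> t \<partial>S1) = (\<integral>t. 0 \<partial>S1)"
      by (rule integral_cong_AE) (use ae in auto)
    thus ?thesis by simp
  next
    case 3
    have H: "(\<integral>t. \<kappa> t * (if cos x - cos t > 0 \<and> sin t > 0 then 1 else 0) \<partial>S1) = 0"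
      using integral_mult_indicator_positive_eq_0[OF k z, of "\<lambda>y. cos x - fst y" "\<lambda>y. snd y"]
      by (simp add: circle_point_def continuous_intros)
    have eq: "indicator {..x} t * \<kappa> t = \<kappa> t - \<kappa> t * (if cos x - cos t > 0 \<and> sin t > 0 then 1 else 0)"
      if t: "t \<in> {-pi..pi}" "t \<noteq> pi" for t
      using atMost_iff_upper_arc[OF 3 t] by (auto simp: indicator_def)
    have ae: "AE t in S1. indicator {..x} t * \<kappa> t = \<kappa> t - \<kappa> t * (if cos x - cos t > 0 \<and> sin t > 0 then 1 else 0)"
    proof (rule eventually_mono[OF eventually_conj[OF AE_S1_neq[of pi] AE_space]])
      fix t assume "t \<noteq> pi \<and> t \<in> space S1"
      thus "indicator {..x} t * \<kappa> t = \<kappa> t - \<kappa> t * (if cos x - cos t > 0 \<and> sin t > 0 then 1 else 0)"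
        by (intro eq) auto
    qed
    have "(\<integral>t. indicator {..x} t * \<kappa> t \<partial>S1) = (\<integral>t. \<kappa> t - \<kappa> t * (if cos x - cos t > 0 \<and> sin t > 0 then 1 else 0) \<partial>S1)"
      by (rule integral_cong_AE) (use ae in auto)
    also have "\<dots> = 0" using H int0 k ai by simp
    finally show ?thesis .
  next
    case 4
    have H: "(\<integral>t. \<kappa> t * (if cos x - cos t > 0 \<and> - sin t > 0 then 1 else 0) \<partial>S1) = 0"
      using integral_mult_indicator_positive_eq_0[OF k z, of "\<lambda>y. cos x - fst y" "\<lambda>y. - snd y"]
      by (simp add: circle_point_def continuous_intros)
    have eq: "indicator {..x} t * \<kappa> t = \<kappa> t * (if cos x - cos t > 0 \<and> - sin t > 0 then 1 else 0)"
      if t: "t \<in> {-pi..pi}" "t \<noteq> -pi" "t \<noteq> x" for t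
      using atMost_iff_lower_arc[OF 4 t] by (auto simp: indicator_def)
    have ae: "AE t in S1. indicator {..x} t * \<kappa> t = \<kappa> t * (if cos x - cos t > 0 \<and> - sin t > 0 then 1 else 0)"
    proof (rule eventually_mono[OF eventually_conj[OF AE_S1_neq[of "-pi"] eventually_conj[OF AE_S1_neq[of x] AE_space]]])
      fix t assume "t \<noteq> -pi \<and> t \<noteq> x \<and> t \<in> space S1"
      thus "indicator {..x} t * \<kappa> t = \<kappa> t * (if cos x - cos t > 0 \<and> - sin t > 0 then 1 else 0)"
        by (intro eq) auto
    qed
    have "(\<integral>t. indicator {..x} t * \<kappa> t \<partial>S1) = (\<integral>t. \<kappa> t * (if cos x - cos t > 0 \<and> - sin t > 0 then 1 else 0) \<partial>S1)"
      by (rule integral_cong_AE) (use ae in auto)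
    thus ?thesis using H by simp
  qed
qed

lemma antiderivative_periodic:
  fixes \<Phi> R :: "real \<Rightarrow> real"
  assumes \<Phi>d: "\<And>x. (\<Phi> has_real_derivative R x) (at x)"
    and Rper: "\<And>x. R (x + 2*pi) = R x" and intR: "integral {-pi..pi} R = 0"
  shows "\<Phi> (x + 2*pi) = \<Phi> x"
proof -
  define D where "D = (\<lambda>x. \<Phi> (x + 2*pi) - \<Phi> x)"
  have "DERIV D x :> 0" for x
  proof -
    have s: "DERIV (\<lambda>x. \<Phi> (x + 2*pi)) x :> R (x + 2*pi)"
      using \<Phi>d[of "x + 2*pi"] by (simp add: DERIV_shift)
    have "DERIV D x :> R (x + 2*pi) - R x"
      unfolding D_def by (rule DERIV_diff[OF s \<Phi>d])
    thus ?thesis using Rper[of x] by simp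
  qed
  hence "\<forall>x. DERIV D x :> 0" by blast
  hence "D x = D (-pi)" by (rule DERIV_isconst_all)
  also have "D (-pi) = \<Phi> pi - \<Phi> (-pi)" unfolding D_def by simp
  also have "\<Phi> pi - \<Phi> (-pi) = integral {-pi..pi} R"
  proof -
    have "(R has_integral (\<Phi> pi - \<Phi> (-pi))) {-pi..pi}"
      by (intro fundamental_theorem_of_calculus)
         (auto simp: has_real_derivative_iff_has_vector_derivative[symmetric]
               intro: has_field_derivative_at_within \<Phi>d)
    thus ?thesis by (simp add: integral_unique)
  qed
  finally show ?thesis using intR unfolding D_def by simp
qed

lemma trig_poly_mean_zero_antiderivative:
  assumes tR: "trig_poly R" and intR: "(\<integral>t. R t \<partial>S1) = 0"
  obtains \<Phi> where "smooth_periodic \<Phi>" "deriv \<Phi> = R"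
proof -
  have Rc: "continuous_on UNIV R" by (rule continuous_on_trig_poly[OF tR])
  have Rcont: "isCont R x" for x
    using trig_poly_deriv[OF tR] by (blast intro: DERIV_isCont)
  have "\<exists>F. \<forall>x::real. -\<infinity> < ereal x \<longrightarrow> ereal x < \<infinity> \<longrightarrow> (F has_vector_derivative R x) (at x)"
    by (rule einterval_antiderivative) (simp_all add: Rcont)
  then obtain \<Phi> where \<Phi>0: "\<forall>x::real. -\<infinity> < ereal x \<longrightarrow> ereal x < \<infinity> \<longrightarrow> (\<Phi> has_vector_derivative R x) (at x)"
    by blast
  have \<Phi>: "(\<Phi> has_vector_derivative R x) (at x)" for x
    using \<Phi>0 by simp
  have \<Phi>d: "(\<Phi> has_real_derivative R x) (at x)" for x
    using \<Phi>[of x] by (simp add: has_real_derivative_iff_has_vector_derivative)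
  have d\<Phi>: "deriv \<Phi> = R" by (intro ext DERIV_imp_deriv \<Phi>d)
  have "integral {-pi..pi} R = 0"
    using intR integral_S1_eq_integral[OF integrable_S1_continuous_on] Rc continuous_on_subset
    by (metis subset_UNIV)
  hence per: "\<Phi> (x + 2*pi) = \<Phi> x" for x
    by (rule antiderivative_periodic[OF \<Phi>d trig_poly_periodic[OF tR]])
  have sm: "smooth_periodic \<Phi>"
    unfolding smooth_periodic_def
  proof (intro conjI allI)
    fix n
    show "(deriv ^^ n) \<Phi> differentiable_on UNIV"
    proof (cases n)
      case 0
      thus ?thesis using \<Phi>d by (auto simp: differentiable_on_def real_differentiable_def intro: has_field_derivative_at_within)
    next
      case (Suc k)
      have "(deriv ^^ n) \<Phi> = (deriv ^^ k) R" unfolding Suc funpow_Suc_right d\<Phi>[symmetric] by simp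
      thus ?thesis using trig_poly_smooth_periodic[OF tR] unfolding smooth_periodic_def by simp
    qed
  next
    fix x show "\<Phi> (x + 2*pi) = \<Phi> x" by (rule per)
  qed
  show ?thesis by (rule that[OF sm d\<Phi>])
qed

lemma du_Bois_Reymond:
  fixes \<kappa> :: "real \<Rightarrow> real"
  assumes k: "integrable S1 \<kappa>"
    and z: "\<And>\<phi>. smooth_periodic \<phi> \<Longrightarrow> (\<integral>t. \<kappa> t * deriv \<phi> t \<partial>S1) = 0"
  shows "AE t in S1. \<kappa> t = (\<integral>t. \<kappa> t \<partial>S1) / (2*pi)"
proof -
  have km[measurable]: "\<kappa> \<in> borel_measurable S1" using k by simp
  define c where "c = (\<integral>t. \<kappa> t \<partial>S1) / (2*pi)"
  define \<kappa>0 where "\<kappa>0 = (\<lambda>t. \<kappa> t - c)"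
  have k0: "integrable S1 \<kappa>0" using k unfolding \<kappa>0_def by simp
  have z0: "(\<integral>t. \<kappa>0 t * T t \<partial>S1) = 0" if T: "trig_poly T" for T
  proof -
    have Tc: "continuous_on UNIV T" by (rule continuous_on_trig_poly[OF T])
    have TcI: "continuous_on {-pi..pi} T" using Tc continuous_on_subset by blast
    have Ti: "integrable S1 T" by (rule integrable_S1_continuous_on[OF TcI])
    define m where "m = (\<integral>t. T t \<partial>S1) / (2*pi)"
    define R where "R = (\<lambda>t. T t + (- m))"
    have tR: "trig_poly R" unfolding R_def using T by (intro trig_poly.intros)
    have intR: "(\<integral>t. R t \<partial>S1) = 0"
      using Ti unfolding R_def m_def by simp
    obtain \<Phi> where sm: "smooth_periodic \<Phi>" and d\<Phi>: "deriv \<Phi> = R"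
      using trig_poly_mean_zero_antiderivative[OF tR intR] by blast
    have Rc: "continuous_on UNIV R" by (rule continuous_on_trig_poly[OF tR])
    have kR: "(\<integral>t. \<kappa> t * R t \<partial>S1) = 0" using z[OF sm] d\<Phi> by simp
    have kTi: "integrable S1 (\<lambda>t. \<kappa> t * T t)" by (rule integrable_S1_mult_continuous_on[OF k TcI])
    have "(\<integral>t. \<kappa> t * T t \<partial>S1) = (\<integral>t. \<kappa> t * R t + m * \<kappa> t \<partial>S1)"
      by (rule Bochner_Integration.integral_cong) (auto simp: R_def algebra_simps)
    also have "\<dots> = (\<integral>t. \<kappa> t * R t \<partial>S1) + m * (\<integral>t. \<kappa> t \<partial>S1)"
      using integrable_S1_mult_continuous_on[OF k continuous_on_subset[OF Rc]] k by simp
    finally have kT: "(\<integral>t. \<kappa> t * T t \<partial>S1) = m * (\<integral>t. \<kappa> t \<partial>S1)" using kR by simp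
    have "(\<integral>t. \<kappa>0 t * T t \<partial>S1) = (\<integral>t. \<kappa> t * T t - c * T t \<partial>S1)"
      by (rule Bochner_Integration.integral_cong) (auto simp: \<kappa>0_def algebra_simps)
    also have "\<dots> = (\<integral>t. \<kappa> t * T t \<partial>S1) - c * (\<integral>t. T t \<partial>S1)"
      using kTi Ti by simp
    also have "\<dots> = 0" unfolding kT c_def m_def by simp
    finally show ?thesis .
  qed
  have "AE t in S1. \<kappa>0 t = 0"
    by (rule AE_S1_zero_if_integrals_atMost_zero[OF k0]) (rule integral_atMost_eq_0_if_orthogonal_trig_poly[OF k0 z0])
  thus ?thesis unfolding \<kappa>0_def c_def by (auto elim!: eventually_mono)
qed

lemma integral_weak_deriv_eq_0:
  assumes "weak_deriv f g"
  shows "(\<integral>x. g x \<partial>S1) = 0"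
proof -
  have s1: "smooth_periodic (\<lambda>x. 1)" by (rule trig_poly_smooth_periodic[OF trig_poly.const])
  have d1: "deriv (\<lambda>x. 1::real) = (\<lambda>x. 0)" by (intro ext DERIV_imp_deriv) auto
  have "(\<integral>x. f x * deriv (\<lambda>x. 1) x \<partial>S1) = - (\<integral>x. g x * 1 \<partial>S1)"
    using assms s1 unfolding weak_deriv_def by blast
  thus ?thesis unfolding d1 by simp
qed

lemma weak_deriv_imp_eq_primitive:
  assumes f: "integrable S1 (f::real\<Rightarrow>real)" and g: "integrable S1 g" and w: "weak_deriv f g"
  obtains c where "AE x in S1. f x = c + primitive g x"
proof -
  have g0: "(\<integral>x. g x \<partial>S1) = 0" by (rule integral_weak_deriv_eq_0[OF w])
  define \<kappa> where "\<kappa> = (\<lambda>x. f x - primitive g x)"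
  have pgi: "integrable S1 (primitive g)"
    by (rule integrable_S1_continuous_on[OF continuous_on_primitive[OF g]])
  have ki: "integrable S1 \<kappa>" unfolding \<kappa>_def using f pgi by simp
  have "(\<integral>t. \<kappa> t * deriv \<phi> t \<partial>S1) = 0" if s: "smooth_periodic \<phi>" for \<phi>
  proof -
    have fi: "integrable S1 (\<lambda>t. f t * deriv \<phi> t)"
      by (rule integrable_S1_mult_continuous_on[OF f smooth_periodic_integrable(4)[OF s]])
    have pgd: "integrable S1 (\<lambda>t. primitive g t * deriv \<phi> t)"
      by (rule integrable_S1_mult_continuous_on[OF pgi smooth_periodic_integrable(4)[OF s]])
    have "(\<integral>t. \<kappa> t * deriv \<phi> t \<partial>S1)
        = (\<integral>t. f t * deriv \<phi> t \<partial>S1) - (\<integral>t. primitive g t * deriv \<phi> t \<partial>S1)"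
      unfolding \<kappa>_def using fi pgd by (simp add: left_diff_distrib)
    also have "\<dots> = 0"
      using w s integral_primitive_mult_deriv[OF g g0 s] unfolding weak_deriv_def by simp
    finally show ?thesis .
  qed
  hence "AE t in S1. \<kappa> t = (\<integral>t. \<kappa> t \<partial>S1) / (2*pi)" by (rule du_Bois_Reymond[OF ki])
  thus ?thesis
    unfolding \<kappa>_def by (intro that[of "(\<integral>t. f t - primitive g t \<partial>S1) / (2*pi)"]) (auto elim!: eventually_mono)
qed
section \<open>The a priori estimate\<close>

lemma sup_le_mean_plus_L1_deriv:
  fixes c :: real
  assumes h: "integrable S1 (h::real\<Rightarrow>real)" and x: "x \<in> {-pi..pi}"
  defines "F \<equiv> \<lambda>x. c + primitive h x"
  shows "2*pi*\<bar>F x\<bar> \<le> (\<integral>y. \<bar>F y\<bar> \<partial>S1) + 2*pi*(\<integral>y. \<bar>h y\<bar> \<partial>S1)"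
proof -
  have Fi: "integrable S1 F"
    unfolding F_def by (intro integrable_S1_continuous_on continuous_intros continuous_on_primitive h)
  have pt: "\<bar>F x\<bar> \<le> \<bar>F y\<bar> + (\<integral>y. \<bar>h y\<bar> \<partial>S1)" if y: "y \<in> {-pi..pi}" for y
  proof -
    have "\<bar>F x - F y\<bar> = \<bar>primitive h x - primitive h y\<bar>" unfolding F_def by simp
    also have "\<dots> \<le> (\<integral>y. \<bar>h y\<bar> \<partial>S1)" by (rule abs_primitive_diff_le[OF h x y])
    finally show ?thesis by linarith
  qed
  have "2*pi*\<bar>F x\<bar> = (\<integral>y. \<bar>F x\<bar> \<partial>S1)" by simp
  also have "\<dots> \<le> (\<integral>y. \<bar>F y\<bar> + (\<integral>y. \<bar>h y\<bar> \<partial>S1) \<partial>S1)"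
    using Fi pt by (intro integral_mono) auto
  also have "\<dots> = (\<integral>y. \<bar>F y\<bar> \<partial>S1) + 2*pi*(\<integral>y. \<bar>h y\<bar> \<partial>S1)"
    using Fi by simp
  finally show ?thesis .
qed

lemma sup_le_L1_deriv_if_mean_zero:
  fixes c :: real
  assumes h: "integrable S1 (h::real\<Rightarrow>real)" and x: "x \<in> {-pi..pi}"
  defines "F \<equiv> \<lambda>x. c + primitive h x"
  assumes F0: "(\<integral>y. F y \<partial>S1) = 0"
  shows "\<bar>F x\<bar> \<le> (\<integral>y. \<bar>h y\<bar> \<partial>S1)"
proof -
  have Fi: "integrable S1 F"
    unfolding F_def by (intro integrable_S1_continuous_on continuous_intros continuous_on_primitive h)
  have pt: "\<bar>F x - F y\<bar> \<le> (\<integral>y. \<bar>h y\<bar> \<partial>S1)" if y: "y \<in> {-pi..pi}" for y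
    unfolding F_def using abs_primitive_diff_le[OF h x y] by simp
  have "2*pi*F x = (\<integral>y. F x - F y \<partial>S1)" using Fi F0 by simp
  hence "2*pi*\<bar>F x\<bar> = \<bar>\<integral>y. F x - F y \<partial>S1\<bar>"
    by (metis abs_mult abs_of_nonneg pi_ge_zero zero_le_mult_iff zero_le_numeral)
  also have "\<dots> \<le> (\<integral>y. \<bar>F x - F y\<bar> \<partial>S1)" by (rule integral_abs_bound)
  also have "\<dots> \<le> (\<integral>y. (\<integral>y. \<bar>h y\<bar> \<partial>S1) \<partial>S1)"
    using Fi pt by (intro integral_mono) auto
  also have "\<dots> = 2*pi*(\<integral>y. \<bar>h y\<bar> \<partial>S1)" by simp
  finally show ?thesis by simp
qed

lemma abs_le_amgm: "l > 0 \<Longrightarrow> \<bar>t::real\<bar> \<le> (l + t^2 / l) / 2"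
proof -
  assume l: "l > 0"
  have "0 \<le> (l - \<bar>t\<bar>)^2" by simp
  hence "2 * l * \<bar>t\<bar> \<le> l^2 + t^2" by (simp add: power2_eq_square algebra_simps)
  hence "2 * l * \<bar>t\<bar> / l \<le> (l^2 + t^2) / l" using l by (intro divide_right_mono) auto
  thus ?thesis using l by (simp add: power2_eq_square field_simps)
qed

lemma L1_le_L2_amgm:
  assumes Fi: "integrable S1 (F::real\<Rightarrow>real)" and F2: "integrable S1 (\<lambda>x. (F x)^2)" and l: "l > 0"
  shows "(\<integral>x. \<bar>F x\<bar> \<partial>S1) \<le> (2*pi*l + (\<integral>x. (F x)^2 \<partial>S1) / l) / 2"
proof -
  have "(\<integral>x. \<bar>F x\<bar> \<partial>S1) \<le> (\<integral>x. (l + (F x)^2 / l) / 2 \<partial>S1)"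
    using Fi F2 abs_le_amgm[OF l] by (intro integral_mono) auto
  also have "\<dots> = (2*pi*l + (\<integral>x. (F x)^2 \<partial>S1) / l) / 2"
    using F2 by simp
  finally show ?thesis .
qed

lemma energy_identity:
  fixes a c :: real
  assumes y2: "integrable S1 (y2::real\<Rightarrow>real)" and int2: "(\<integral>x. y2 x \<partial>S1) = 0"
  defines "y1 \<equiv> \<lambda>x. a + primitive y2 x"
  assumes int1: "(\<integral>x. y1 x \<partial>S1) = 0"
  shows "(\<integral>x. y2 x * (c + primitive y1 x) \<partial>S1) = - (\<integral>x. (y1 x)^2 \<partial>S1)"
proof -
  have y1c: "continuous_on {-pi..pi} y1"
    unfolding y1_def by (intro continuous_intros continuous_on_primitive y2)
  have y1i: "integrable S1 y1" by (rule integrable_S1_continuous_on[OF y1c])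
  have y1sq: "integrable S1 (\<lambda>x. (y1 x)^2)"
    unfolding power2_eq_square by (rule integrable_S1_mult_continuous_on[OF y1i y1c])
  have parts: "(\<integral>x. y2 x * primitive y1 x \<partial>S1) + (\<integral>x. primitive y2 x * y1 x \<partial>S1) = 0"
    using integration_by_parts_primitive[OF y2 y1i] int2 by simp
  have i1: "integrable S1 (\<lambda>x. y2 x * primitive y1 x)"
    by (rule integrable_S1_mult_continuous_on[OF y2 continuous_on_primitive[OF y1i]])
  have "(\<integral>x. y2 x * (c + primitive y1 x) \<partial>S1) = (\<integral>x. c * y2 x + y2 x * primitive y1 x \<partial>S1)"
    by (simp add: algebra_simps)
  also have "\<dots> = (\<integral>x. y2 x * primitive y1 x \<partial>S1)" using i1 y2 int2 by simp
  finally have a: "(\<integral>x. y2 x * (c + primitive y1 x) \<partial>S1) = (\<integral>x. y2 x * primitive y1 x \<partial>S1)" .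
  have "(\<integral>x. primitive y2 x * y1 x \<partial>S1) = (\<integral>x. (y1 x)^2 - a * y1 x \<partial>S1)"
    by (rule Bochner_Integration.integral_cong) (auto simp: y1_def power2_eq_square algebra_simps)
  also have "\<dots> = (\<integral>x. (y1 x)^2 \<partial>S1)" using y1sq y1i int1 by simp
  finally show ?thesis using a parts by simp
qed

lemma energy_inequality:
  fixes V y2 :: "real \<Rightarrow> real" and a c :: real
  assumes Vm[measurable]: "V \<in> borel_measurable S1"
    and Vlow: "AE x in S1. V x \<ge> m" and Vup: "AE x in S1. \<bar>V x\<bar> \<le> B"
    and y2: "integrable S1 y2" and int2: "(\<integral>x. y2 x \<partial>S1) = 0"
  defines "y1 \<equiv> \<lambda>x. a + primitive y2 x"
  defines "y \<equiv> \<lambda>x. c + primitive y1 x"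
  assumes int1: "(\<integral>x. y1 x \<partial>S1) = 0"
  shows "\<epsilon>^2 * (\<integral>x. (y1 x)^2 \<partial>S1) + m * (\<integral>x. (y x)^2 \<partial>S1)
      \<le> (\<integral>x. (- (\<epsilon>^2) * y2 x + V x * y x) * y x \<partial>S1)"
proof -
  have B0: "B \<ge> 0"
    by (rule AE_S1_const) (use Vup in \<open>auto elim!: eventually_mono\<close>)
  have y1c: "continuous_on {-pi..pi} y1"
    unfolding y1_def by (intro continuous_intros continuous_on_primitive y2)
  have yc: "continuous_on {-pi..pi} y"
    unfolding y_def by (intro continuous_intros continuous_on_primitive integrable_S1_continuous_on y1c)
  have yi: "integrable S1 y" by (rule integrable_S1_continuous_on[OF yc])
  have ysq: "integrable S1 (\<lambda>x. (y x)^2)"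
    unfolding power2_eq_square by (rule integrable_S1_mult_continuous_on[OF yi yc])
  have [measurable]: "y \<in> borel_measurable S1" using yi by simp
  have Vysq: "integrable S1 (\<lambda>x. V x * (y x)^2)"
  proof (rule integrable_S1_dominated[of "\<lambda>x. B * (y x)^2"])
    show "integrable S1 (\<lambda>x. B * (y x)^2)" using ysq by simp
    show "AE x in S1. \<bar>V x * (y x)^2\<bar> \<le> \<bar>B * (y x)^2\<bar>"
      using Vup by (auto elim!: eventually_mono simp: abs_mult B0 mult_right_mono)
  qed simp
  have y2y: "integrable S1 (\<lambda>x. y2 x * y x)" by (rule integrable_S1_mult_continuous_on[OF y2 yc])
  have "(\<integral>x. (- (\<epsilon>^2) * y2 x + V x * y x) * y x \<partial>S1)
      = (\<integral>x. - (\<epsilon>^2) * (y2 x * y x) + V x * (y x)^2 \<partial>S1)"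
    by (simp add: power2_eq_square algebra_simps)
  also have "\<dots> = - (\<epsilon>^2) * (\<integral>x. y2 x * y x \<partial>S1) + (\<integral>x. V x * (y x)^2 \<partial>S1)"
    using y2y Vysq by simp
  also have "(\<integral>x. y2 x * y x \<partial>S1) = - (\<integral>x. (y1 x)^2 \<partial>S1)"
    unfolding y_def y1_def by (rule energy_identity[OF y2 int2 int1[unfolded y1_def]])
  finally have eq: "(\<integral>x. (- (\<epsilon>^2) * y2 x + V x * y x) * y x \<partial>S1)
      = \<epsilon>^2 * (\<integral>x. (y1 x)^2 \<partial>S1) + (\<integral>x. V x * (y x)^2 \<partial>S1)" by simp
  have "m * (\<integral>x. (y x)^2 \<partial>S1) = (\<integral>x. m * (y x)^2 \<partial>S1)" by simp
  also have "\<dots> \<le> (\<integral>x. V x * (y x)^2 \<partial>S1)"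
    using ysq Vysq Vlow by (intro integral_mono_AE) (auto elim!: eventually_mono intro: mult_right_mono)
  finally show ?thesis using eq by simp
qed

text \<open>AM-GM with weights proportional to \<open>D = F + \<delta>\<close> turns the energy inequality into
  \<open>S \<le> D K/2 + F S/(2D)\<close>, hence \<open>S \<le> (F + \<delta>) K\<close> for every \<open>\<delta> > 0\<close>.  Below,
  \<open>Y = \<parallel>y\<parallel>\<^sub>1\<close>, \<open>Y1 = \<parallel>y'\<parallel>\<^sub>1\<close>, \<open>A2 = \<parallel>y'\<parallel>\<^sub>2\<^sup>2\<close>, \<open>B2 = \<parallel>y\<parallel>\<^sub>2\<^sup>2\<close> and \<open>S \<ge> sup |y|\<close>.\<close>
lemma amgm_absorption:
  fixes A2 B2 F S Y Y1 :: real
  assumes eps: "\<epsilon> > 0" and m: "m > 0" and F0: "F \<ge> 0" and S0: "S \<ge> 0"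
    and S_def: "S = Y / (2*pi) + Y1"
    and Y: "\<And>l. l > 0 \<Longrightarrow> Y \<le> (2*pi*l + B2 / l) / 2"
    and Y1: "\<And>\<mu>. \<mu> > 0 \<Longrightarrow> Y1 \<le> (2*pi*\<mu> + A2 / \<mu>) / 2"
    and fy: "\<epsilon>^2 * A2 + m * B2 \<le> F * S"
  shows "S \<le> F * (1/(2*pi*m) + 2*pi/\<epsilon>^2)"
proof -
  define K where "K = 1/(2*pi*m) + 2*pi/\<epsilon>^2"
  have S_le: "S \<le> (F + d) * K" if d: "d > 0" for d
  proof -
    define D where "D = F + d"
    have D: "D > 0" unfolding D_def using F0 d by simp
    define l where "l = D / (2*pi*m)"
    define \<mu> where "\<mu> = D / \<epsilon>^2"
    have l0: "l > 0" unfolding l_def using D m by simp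
    have \<mu>0: "\<mu> > 0" unfolding \<mu>_def using D eps by simp
    have a2: "Y / (2*pi) \<le> (2*pi*l + B2 / l) / 2 / (2*pi)"
      using Y[OF l0] by (rule divide_right_mono) simp
    have "S \<le> (2*pi*l + B2 / l) / 2 / (2*pi) + (2*pi*\<mu> + A2 / \<mu>) / 2"
      unfolding S_def using a2 Y1[OF \<mu>0] by (rule add_mono)
    also have "\<dots> = l/2 + pi*\<mu> + (m * B2 + \<epsilon>^2 * A2) / (2*D)"
      unfolding l_def \<mu>_def using D m eps by (simp add: field_simps)
    also have "(m * B2 + \<epsilon>^2 * A2) / (2*D) \<le> (F * S) / (2*D)"
      using fy D by (intro divide_right_mono) auto
    also have "(F * S) / (2*D) \<le> (D * S) / (2*D)"
      using D S0 unfolding D_def using d by (intro divide_right_mono mult_right_mono) auto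
    also have "(D * S) / (2*D) = S / 2" using D by simp
    finally have "S \<le> l + 2*pi*\<mu>" by simp
    also have "\<dots> = D * K" unfolding l_def \<mu>_def K_def using m eps by (simp add: field_simps)
    finally show ?thesis unfolding D_def .
  qed
  have K0: "K > 0" unfolding K_def using m eps by (intro add_pos_pos) auto
  have "S \<le> F * K + e" if e: "e > 0" for e
  proof -
    have "S \<le> (F + e / K) * K" using S_le e K0 by simp
    also have "\<dots> = F * K + e" using K0 by (simp add: algebra_simps)
    finally show ?thesis .
  qed
  hence "S \<le> F * K" by (rule field_le_epsilon)
  thus ?thesis unfolding K_def .
qed

lemma sup_le_L1_Lop_periodic:
  fixes V y2 :: "real \<Rightarrow> real" and a c :: real
  assumes eps: "\<epsilon> > 0" and m: "m > 0" and Vm[measurable]: "V \<in> borel_measurable S1"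
    and Vlow: "AE x in S1. V x \<ge> m" and Vup: "AE x in S1. \<bar>V x\<bar> \<le> B"
    and y2: "integrable S1 y2" and int2: "(\<integral>x. y2 x \<partial>S1) = 0"
  defines "y1 \<equiv> \<lambda>x. a + primitive y2 x"
  defines "y \<equiv> \<lambda>x. c + primitive y1 x"
  assumes int1: "(\<integral>x. y1 x \<partial>S1) = 0" and x: "x \<in> {-pi..pi}"
  shows "\<bar>y x\<bar> \<le> (\<integral>x. \<bar>- (\<epsilon>^2) * y2 x + V x * y x\<bar> \<partial>S1) * (1/(2*pi*m) + 2*pi/\<epsilon>^2)"
proof -
  define f where "f = (\<lambda>x. - (\<epsilon>^2) * y2 x + V x * y x)"
  define F where "F = (\<integral>x. \<bar>f x\<bar> \<partial>S1)"
  define K where "K = 1/(2*pi*m) + 2*pi/\<epsilon>^2"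
  define A2 where "A2 = (\<integral>x. (y1 x)^2 \<partial>S1)"
  define B2 where "B2 = (\<integral>x. (y x)^2 \<partial>S1)"
  have B0: "B \<ge> 0"
    by (rule AE_S1_const) (use Vup in \<open>auto elim!: eventually_mono\<close>)
  have y1c: "continuous_on {-pi..pi} y1"
    unfolding y1_def by (intro continuous_intros continuous_on_primitive y2)
  have y1i: "integrable S1 y1" by (rule integrable_S1_continuous_on[OF y1c])
  have yc: "continuous_on {-pi..pi} y"
    unfolding y_def by (intro continuous_intros continuous_on_primitive y1i)
  have yi: "integrable S1 y" by (rule integrable_S1_continuous_on[OF yc])
  have [measurable]: "y \<in> borel_measurable S1" using yi by simp
  have y1sq: "integrable S1 (\<lambda>x. (y1 x)^2)"
    unfolding power2_eq_square by (rule integrable_S1_mult_continuous_on[OF y1i y1c])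
  have ysq: "integrable S1 (\<lambda>x. (y x)^2)"
    unfolding power2_eq_square by (rule integrable_S1_mult_continuous_on[OF yi yc])
  have Vy: "integrable S1 (\<lambda>x. V x * y x)"
  proof (rule integrable_S1_dominated[of "\<lambda>x. B * y x"])
    show "integrable S1 (\<lambda>x. B * y x)" using yi by simp
    show "AE x in S1. \<bar>V x * y x\<bar> \<le> \<bar>B * y x\<bar>"
      using Vup by (auto elim!: eventually_mono simp: abs_mult B0 mult_right_mono)
  qed simp
  have fi: "integrable S1 f" unfolding f_def using y2 Vy by simp
  have F0: "F \<ge> 0" unfolding F_def by simp
  have energy: "\<epsilon>^2 * A2 + m * B2 \<le> (\<integral>x. f x * y x \<partial>S1)"
    using energy_inequality[OF Vm Vlow Vup y2 int2 int1[unfolded y1_def]]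
    unfolding A2_def B2_def f_def y_def y1_def .
  define S where "S = (\<integral>x. \<bar>y x\<bar> \<partial>S1) / (2*pi) + (\<integral>x. \<bar>y1 x\<bar> \<partial>S1)"
  have S0: "S \<ge> 0" unfolding S_def by (intro add_nonneg_nonneg divide_nonneg_pos) auto
  have yb: "\<bar>y x\<bar> \<le> S" if x: "x \<in> {-pi..pi}" for x
    using sup_le_mean_plus_L1_deriv[OF y1i x, of c] unfolding S_def y_def
    by (simp add: field_simps)
  have "(\<integral>x. f x * y x \<partial>S1) \<le> (\<integral>x. \<bar>f x\<bar> * S \<partial>S1)"
  proof (rule integral_mono)
    show "integrable S1 (\<lambda>x. f x * y x)" by (rule integrable_S1_mult_continuous_on[OF fi yc])
    show "integrable S1 (\<lambda>x. \<bar>f x\<bar> * S)" using fi by simp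
    fix x assume "x \<in> space S1"
    hence "\<bar>f x\<bar> * \<bar>y x\<bar> \<le> \<bar>f x\<bar> * S" using yb by (intro mult_left_mono) auto
    thus "f x * y x \<le> \<bar>f x\<bar> * S" by (metis abs_ge_self abs_mult order_trans)
  qed
  hence fy: "\<epsilon>^2 * A2 + m * B2 \<le> F * S" using energy unfolding F_def by simp
  have "S \<le> F * K"
    unfolding K_def
  proof (rule amgm_absorption[OF eps m F0 S0 S_def _ _ fy])
    show "(\<integral>x. \<bar>y x\<bar> \<partial>S1) \<le> (2*pi*l + B2 / l) / 2" if "l > 0" for l
      unfolding B2_def by (rule L1_le_L2_amgm[OF yi ysq that])
    show "(\<integral>x. \<bar>y1 x\<bar> \<partial>S1) \<le> (2*pi*\<mu> + A2 / \<mu>) / 2" if "\<mu> > 0" for \<mu>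
      unfolding A2_def by (rule L1_le_L2_amgm[OF y1i y1sq that])
  qed
  thus ?thesis using yb[OF x] unfolding F_def f_def K_def by simp
qed

lemma weak_W2_representative:
  assumes ui: "integrable S1 u" and u1i: "integrable S1 u1" and u2i: "integrable S1 u2"
    and w1: "weak_deriv u u1" and w2: "weak_deriv u1 u2"
  obtains a0 c0 where "AE x in S1. u1 x = a0 + primitive u2 x"
    and "AE x in S1. u x = c0 + primitive (\<lambda>s. a0 + primitive u2 s) x"
    and "(\<integral>x. a0 + primitive u2 x \<partial>S1) = 0"
proof -
  obtain c0 where c0: "AE x in S1. u x = c0 + primitive u1 x"
    using weak_deriv_imp_eq_primitive[OF ui u1i w1] by blast
  obtain a0 where e1: "AE x in S1. u1 x = a0 + primitive u2 x"
    using weak_deriv_imp_eq_primitive[OF u1i u2i w2] by blast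
  have [measurable]: "u1 \<in> borel_measurable S1" using u1i by simp
  have y1i: "integrable S1 (\<lambda>x. a0 + primitive u2 x)"
    by (intro integrable_S1_continuous_on continuous_intros continuous_on_primitive u2i)
  have "AE x in S1. u x = c0 + primitive (\<lambda>s. a0 + primitive u2 s) x"
    using c0 primitive_cong_AE[OF u1i y1i e1]
    by (auto elim!: eventually_mono[OF eventually_conj[OF _ AE_space]])
  moreover have "(\<integral>x. a0 + primitive u2 x \<partial>S1) = 0"
    using integral_weak_deriv_eq_0[OF w1] integral_cong_AE[of u1 S1 "\<lambda>x. a0 + primitive u2 x"] e1 y1i
    by simp
  ultimately show ?thesis using e1 that by blast
qed

lemma Lop_sup_bounds:
  fixes u u1 u2 V :: "real \<Rightarrow> real" and \<epsilon> m B :: real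
  assumes eps: "\<epsilon> > 0" and m: "m > 0" and Vm[measurable]: "V \<in> borel_measurable S1"
    and Vlow: "AE x in S1. V x \<ge> m" and Vup: "AE x in S1. \<bar>V x\<bar> \<le> B"
    and ui: "integrable S1 u" and u1i: "integrable S1 u1" and u2i: "integrable S1 u2"
    and w1: "weak_deriv u u1" and w2: "weak_deriv u1 u2"
  defines "F \<equiv> \<integral>x. \<bar>Lop \<epsilon> V u u2 x\<bar> \<partial>S1" and "K \<equiv> 1/(2*pi*m) + 2*pi/\<epsilon>^2"
  shows "AE x in S1. \<bar>u x\<bar> \<le> F * K"
    and "AE x in S1. \<bar>u1 x\<bar> \<le> (2*pi*B*(F * K) + F) / \<epsilon>^2"
    and "AE x in S1. \<bar>u2 x\<bar> \<le> 1/\<epsilon>^2 * \<bar>Lop \<epsilon> V u u2 x\<bar> + B * (F * K) / \<epsilon>^2"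
proof -
  have [measurable]: "u \<in> borel_measurable S1" "u1 \<in> borel_measurable S1" "u2 \<in> borel_measurable S1"
    using ui u1i u2i by auto
  have B0: "B \<ge> 0"
    by (rule AE_S1_const) (use Vup in \<open>auto elim!: eventually_mono\<close>)
  obtain a0 c0 where e1: "AE x in S1. u1 x = a0 + primitive u2 x"
    and e0: "AE x in S1. u x = c0 + primitive (\<lambda>s. a0 + primitive u2 s) x"
    and int1: "(\<integral>x. a0 + primitive u2 x \<partial>S1) = 0"
    by (rule weak_W2_representative[OF ui u1i u2i w1 w2])
  have int2: "(\<integral>x. u2 x \<partial>S1) = 0" by (rule integral_weak_deriv_eq_0[OF w2])
  define y1 where "y1 = (\<lambda>x. a0 + primitive u2 x)"
  define y where "y = (\<lambda>x. c0 + primitive y1 x)"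
  have e1y: "AE x in S1. u1 x = y1 x" using e1 unfolding y1_def .
  have e0: "AE x in S1. u x = y x" using e0 unfolding y_def y1_def .
  have int1: "(\<integral>x. y1 x \<partial>S1) = 0" using int1 unfolding y1_def .
  have y1i: "integrable S1 y1"
    unfolding y1_def by (intro integrable_S1_continuous_on continuous_intros continuous_on_primitive u2i)
  have F_eq: "F = (\<integral>x. \<bar>- (\<epsilon>^2) * u2 x + V x * y x\<bar> \<partial>S1)"
    unfolding F_def Lop_def
    by (rule integral_cong_AE) (use e0 y1i in \<open>auto simp: y_def elim!: eventually_mono\<close>)
  have "\<bar>y x\<bar> \<le> F * K" if "x \<in> {-pi..pi}" for x
    using sup_le_L1_Lop_periodic[OF eps m Vm Vlow Vup u2i int2 int1[unfolded y1_def] that]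
    unfolding F_eq K_def y_def y1_def .
  thus ub: "AE x in S1. \<bar>u x\<bar> \<le> F * K"
    using e0 by (auto elim!: eventually_mono[OF eventually_conj[OF _ AE_space]])
  show u2b: "AE x in S1. \<bar>u2 x\<bar> \<le> 1/\<epsilon>^2 * \<bar>Lop \<epsilon> V u u2 x\<bar> + B * (F * K) / \<epsilon>^2"
  proof (rule eventually_mono[OF eventually_conj[OF ub Vup]])
    fix x assume a: "\<bar>u x\<bar> \<le> F * K \<and> \<bar>V x\<bar> \<le> B"
    have "u2 x = (V x * u x - Lop \<epsilon> V u u2 x) / \<epsilon>^2"
      unfolding Lop_def using eps by (simp add: field_simps)
    hence "\<bar>u2 x\<bar> = \<bar>V x * u x - Lop \<epsilon> V u u2 x\<bar> / \<epsilon>^2" by simp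
    also have "\<bar>V x * u x - Lop \<epsilon> V u u2 x\<bar> \<le> \<bar>V x\<bar> * \<bar>u x\<bar> + \<bar>Lop \<epsilon> V u u2 x\<bar>"
      by (simp add: abs_mult[symmetric] abs_triangle_ineq4)
    also have "\<bar>V x\<bar> * \<bar>u x\<bar> \<le> B * (F * K)" using a B0 by (intro mult_mono) auto
    finally show "\<bar>u2 x\<bar> \<le> 1/\<epsilon>^2 * \<bar>Lop \<epsilon> V u u2 x\<bar> + B * (F * K) / \<epsilon>^2"
      using eps by (simp add: divide_right_mono add_divide_distrib)
  qed
  have Vu: "integrable S1 (\<lambda>x. V x * u x)"
  proof (rule integrable_S1_dominated[of "\<lambda>x. B * u x"])
    show "integrable S1 (\<lambda>x. B * u x)" using ui by simp
    show "AE x in S1. \<bar>V x * u x\<bar> \<le> \<bar>B * u x\<bar>"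
      using Vup by (auto elim!: eventually_mono simp: abs_mult B0 mult_right_mono)
  qed simp
  have Li: "integrable S1 (Lop \<epsilon> V u u2)" unfolding Lop_def using u2i Vu by simp
  have "(\<integral>x. \<bar>u2 x\<bar> \<partial>S1) \<le> (\<integral>x. 1/\<epsilon>^2 * \<bar>Lop \<epsilon> V u u2 x\<bar> + B * (F * K) / \<epsilon>^2 \<partial>S1)"
    using u2i Li u2b by (intro integral_mono_AE) auto
  also have "\<dots> = (2*pi*B*(F * K) + F) / \<epsilon>^2"
    using Li unfolding F_def by (simp add: add_divide_distrib)
  finally have L1u2: "(\<integral>x. \<bar>u2 x\<bar> \<partial>S1) \<le> (2*pi*B*(F * K) + F) / \<epsilon>^2" .
  have "\<bar>y1 x\<bar> \<le> (2*pi*B*(F * K) + F) / \<epsilon>^2" if "x \<in> {-pi..pi}" for x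
    using sup_le_L1_deriv_if_mean_zero[OF u2i that, of a0] int1 L1u2 unfolding y1_def by simp
  thus "AE x in S1. \<bar>u1 x\<bar> \<le> (2*pi*B*(F * K) + F) / \<epsilon>^2"
    using e1y by (auto elim!: eventually_mono[OF eventually_conj[OF _ AE_space]])
qed

section \<open>Uniqueness and the \<open>W\<^sup>2\<^sup>,\<^sup>p\<close> estimate\<close>

lemma weak_deriv_diff:
  assumes u: "integrable S1 u" and v: "integrable S1 v" and u1: "integrable S1 u1" and v1: "integrable S1 v1"
    and wu: "weak_deriv u u1" and wv: "weak_deriv v v1"
  shows "weak_deriv (\<lambda>x. u x - v x) (\<lambda>x. u1 x - v1 x)"
  unfolding weak_deriv_def
proof (intro allI impI)
  fix \<phi> assume s: "smooth_periodic \<phi>"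
  have a: "integrable S1 (\<lambda>x. u x * deriv \<phi> x)" by (rule integrable_S1_mult_continuous_on[OF u smooth_periodic_integrable(4)[OF s]])
  have b: "integrable S1 (\<lambda>x. v x * deriv \<phi> x)" by (rule integrable_S1_mult_continuous_on[OF v smooth_periodic_integrable(4)[OF s]])
  have c: "integrable S1 (\<lambda>x. u1 x * \<phi> x)" by (rule integrable_S1_mult_continuous_on[OF u1 smooth_periodic_integrable(3)[OF s]])
  have d: "integrable S1 (\<lambda>x. v1 x * \<phi> x)" by (rule integrable_S1_mult_continuous_on[OF v1 smooth_periodic_integrable(3)[OF s]])
  have "(\<integral>x. (u x - v x) * deriv \<phi> x \<partial>S1) = (\<integral>x. u x * deriv \<phi> x \<partial>S1) - (\<integral>x. v x * deriv \<phi> x \<partial>S1)"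
    using a b by (simp add: left_diff_distrib)
  also have "\<dots> = - (\<integral>x. u1 x * \<phi> x \<partial>S1) + (\<integral>x. v1 x * \<phi> x \<partial>S1)"
    using wu wv s unfolding weak_deriv_def by simp
  also have "\<dots> = - (\<integral>x. (u1 x - v1 x) * \<phi> x \<partial>S1)"
    using c d by (simp add: left_diff_distrib)
  finally show "(\<integral>x. (u x - v x) * deriv \<phi> x \<partial>S1) = - (\<integral>x. (u1 x - v1 x) * \<phi> x \<partial>S1)" .
qed

lemma Lop_eq_0_imp_eq_0:
  fixes u u1 u2 V :: "real \<Rightarrow> real"
  assumes eps: "\<epsilon> > 0" and m: "m > 0" and Vm[measurable]: "V \<in> borel_measurable S1"
    and Vlow: "AE x in S1. V x \<ge> m" and Vup: "AE x in S1. \<bar>V x\<bar> \<le> B"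
    and ui: "integrable S1 u" and u1i: "integrable S1 u1" and u2i: "integrable S1 u2"
    and w1: "weak_deriv u u1" and w2: "weak_deriv u1 u2"
    and L0: "AE x in S1. Lop \<epsilon> V u u2 x = 0"
  shows "AE x in S1. u x = 0"
proof -
  have [measurable]: "u \<in> borel_measurable S1" "u2 \<in> borel_measurable S1"
    using ui u2i by auto
  have "(\<integral>x. \<bar>- (\<epsilon>^2) * u2 x + V x * u x\<bar> \<partial>S1) = (\<integral>x. 0 \<partial>S1)"
    by (rule integral_cong_AE) (use L0 in \<open>auto simp: Lop_def elim!: eventually_mono\<close>)
  hence "(\<integral>x. \<bar>Lop \<epsilon> V u u2 x\<bar> \<partial>S1) = 0" by (simp add: Lop_def)
  with Lop_sup_bounds(1)[OF eps m Vm Vlow Vup ui u1i u2i w1 w2]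
  have "AE x in S1. \<bar>u x\<bar> \<le> 0" by simp
  thus ?thesis by (rule eventually_mono) simp
qed

lemma W2p_imp_integrable:
  assumes "p > 1" "W2p p u u1 u2"
  shows "integrable S1 u" "integrable S1 u1" "integrable S1 u2"
  using assms unfolding W2p_def by (auto intro: Lp_imp_integrable)

lemma Lop_uniqueness:
  assumes p: "p > 1" and eps: "\<epsilon> > 0" and m: "m > 0" and Vm: "V \<in> borel_measurable S1"
    and Vlow: "AE x in S1. V x \<ge> m" and Vup: "AE x in S1. \<bar>V x\<bar> \<le> B"
    and U: "W2p p u u1 u2" and W: "W2p p v v1 v2"
    and e: "AE x in S1. Lop \<epsilon> V u u2 x = Lop \<epsilon> V v v2 x"
  shows "AE x in S1. u x = v x"
proof -
  note ui = W2p_imp_integrable[OF p U] and vi = W2p_imp_integrable[OF p W]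
  have w1: "weak_deriv (\<lambda>x. u x - v x) (\<lambda>x. u1 x - v1 x)"
    using U W unfolding W2p_def by (intro weak_deriv_diff ui vi) auto
  have w2: "weak_deriv (\<lambda>x. u1 x - v1 x) (\<lambda>x. u2 x - v2 x)"
    using U W unfolding W2p_def by (intro weak_deriv_diff ui vi) auto
  have "AE x in S1. Lop \<epsilon> V (\<lambda>x. u x - v x) (\<lambda>x. u2 x - v2 x) x = 0"
    using e by (rule eventually_mono) (simp add: Lop_def algebra_simps)
  moreover have "integrable S1 (\<lambda>x. u x - v x)" "integrable S1 (\<lambda>x. u1 x - v1 x)"
    "integrable S1 (\<lambda>x. u2 x - v2 x)"
    using ui vi by auto
  ultimately have "AE x in S1. u x - v x = 0"
    using Lop_eq_0_imp_eq_0[OF eps m Vm Vlow Vup _ _ _ w1 w2] by blast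
  thus ?thesis by (rule eventually_mono) simp
qed

lemma Lp_Lop:
  assumes p: "p > 1" and Vm[measurable]: "V \<in> borel_measurable S1"
    and Vup: "AE x in S1. \<bar>V x\<bar> \<le> B" and u: "Lp p u" and u2: "Lp p u2"
  shows "Lp p (Lop \<epsilon> V u u2)"
proof -
  have [measurable]: "u \<in> borel_measurable S1" "u2 \<in> borel_measurable S1"
    using u u2 unfolding Lp_def by auto
  have B0: "B \<ge> 0"
    by (rule AE_S1_const) (use Vup in \<open>auto elim!: eventually_mono\<close>)
  have fb: "AE x in S1. \<bar>Lop \<epsilon> V u u2 x\<bar> \<le> \<epsilon>^2 * \<bar>u2 x\<bar> + B * \<bar>u x\<bar>"
  proof (rule eventually_mono[OF Vup])
    fix x assume v: "\<bar>V x\<bar> \<le> B"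
    have "\<bar>Lop \<epsilon> V u u2 x\<bar> \<le> \<bar>- (\<epsilon>^2) * u2 x\<bar> + \<bar>V x * u x\<bar>"
      unfolding Lop_def by (rule abs_triangle_ineq)
    also have "\<bar>V x * u x\<bar> \<le> B * \<bar>u x\<bar>" using v by (simp add: abs_mult mult_right_mono)
    finally show "\<bar>Lop \<epsilon> V u u2 x\<bar> \<le> \<epsilon>^2 * \<bar>u2 x\<bar> + B * \<bar>u x\<bar>" by (simp add: abs_mult)
  qed
  have "Lop \<epsilon> V u u2 \<in> borel_measurable S1" unfolding Lop_def by measurable
  thus ?thesis by (rule Lp_AE_le_lincomb[OF p u2 u _ _ B0 fb]) simp
qed

lemma W2p_norm_le_Lop:
  fixes u u1 u2 V :: "real \<Rightarrow> real"
  assumes p: "p > 1" and eps: "\<epsilon> > 0" and m: "m > 0" and Vm[measurable]: "V \<in> borel_measurable S1"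
    and Vlow: "AE x in S1. V x \<ge> m" and Vup: "AE x in S1. \<bar>V x\<bar> \<le> B"
    and U: "W2p p u u1 u2"
  defines "q \<equiv> (2*pi) powr (1/p)" and "Q \<equiv> 2*pi + 1" and "c \<equiv> 1/(2*pi*m) + 2*pi"
  defines "C \<equiv> q*Q*c + q*Q*(2*pi*B*c + 1) + 2*(1 + q*B*Q*c)"
  shows "W2p_norm p u u1 u2 \<le> C * (max 1 (1/\<epsilon>^2))^2 * Lp_norm p (Lop \<epsilon> V u u2)"
proof -
  note ui = W2p_imp_integrable[OF p U]
  have Lu: "Lp p u" "Lp p u1" "Lp p u2" and wd: "weak_deriv u u1" "weak_deriv u1 u2"
    using U unfolding W2p_def by auto
  have [measurable]: "u \<in> borel_measurable S1" "u1 \<in> borel_measurable S1" "u2 \<in> borel_measurable S1"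
    using ui by auto
  have B0: "B \<ge> 0"
    by (rule AE_S1_const) (use Vup in \<open>auto elim!: eventually_mono\<close>)
  define f where "f = Lop \<epsilon> V u u2"
  have Lf: "Lp p f" unfolding f_def by (rule Lp_Lop[OF p Vm Vup Lu(1) Lu(3)])
  define N where "N = Lp_norm p f"
  define F where "F = (\<integral>x. \<bar>f x\<bar> \<partial>S1)"
  define K where "K = 1/(2*pi*m) + 2*pi/\<epsilon>^2"
  define E where "E = max 1 (1/\<epsilon>^2)"
  have N0: "N \<ge> 0" unfolding N_def by (rule Lp_norm_nonneg)
  have F0: "F \<ge> 0" unfolding F_def by simp
  have K0: "K \<ge> 0" unfolding K_def using m by simp
  have q0: "q \<ge> 0" unfolding q_def by simp
  have Q0: "Q \<ge> 0" unfolding Q_def by simp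
  have c0: "c \<ge> 0" unfolding c_def using m by simp
  have E1: "1 \<le> E" and eE: "1/\<epsilon>^2 \<le> E" unfolding E_def by auto
  have EE: "E \<le> E^2" using E1 by (simp add: power2_eq_square)
  have FN: "F \<le> Q * N" unfolding F_def Q_def N_def by (rule L1_le_Lp_norm[OF p Lf])
  have "1/(2*pi*m) * 1 \<le> 1/(2*pi*m) * E" by (rule mult_left_mono[OF E1]) (use m in simp)
  moreover have "2*pi * (1/\<epsilon>^2) \<le> 2*pi * E" by (rule mult_left_mono[OF eE]) simp
  ultimately have KE: "K \<le> c * E" unfolding K_def c_def by (simp add: distrib_right)
  have "F * K \<le> (Q * N) * (c * E)" by (rule mult_mono[OF FN KE]) (use Q0 N0 K0 in simp_all)
  hence FK: "F * K \<le> (Q * c) * (E * N)" by (simp add: ac_simps)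
  have EN: "E * N \<le> E^2 * N" by (rule mult_right_mono[OF EE N0])
  have ce1: "AE x in S1. \<bar>u x\<bar> \<le> F * K"
    using Lop_sup_bounds(1)[OF eps m Vm Vlow Vup ui wd] unfolding F_def f_def K_def .
  have ce2: "AE x in S1. \<bar>u1 x\<bar> \<le> (2*pi*B*(F * K) + F) / \<epsilon>^2"
    using Lop_sup_bounds(2)[OF eps m Vm Vlow Vup ui wd] unfolding F_def f_def K_def .
  have ce3: "AE x in S1. \<bar>u2 x\<bar> \<le> 1/\<epsilon>^2 * \<bar>f x\<bar> + B * (F * K) / \<epsilon>^2"
    using Lop_sup_bounds(3)[OF eps m Vm Vlow Vup ui wd] unfolding F_def f_def K_def .
  have "Lp_norm p u \<le> q * (F * K)"
    unfolding q_def by (rule Lp_AE_bounded(2)[OF p _ _ ce1]) (use F0 K0 in simp_all)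
  also have "\<dots> \<le> q * ((Q * c) * (E * N))" by (rule mult_left_mono[OF FK q0])
  also have "\<dots> \<le> q * ((Q * c) * (E^2 * N))"
    by (intro mult_left_mono EN) (use q0 Q0 c0 in simp_all)
  also have "\<dots> = q * Q * c * E^2 * N" by (simp add: ac_simps)
  finally have n1: "Lp_norm p u \<le> q * Q * c * E^2 * N" .
  have QN: "Q * N \<le> Q * (E * N)" using mult_left_mono[OF mult_right_mono[OF E1 N0] Q0] by simp
  have "2*pi*B*(F * K) + F \<le> 2*pi*B*((Q * c) * (E * N)) + Q * (E * N)"
    using FN QN by (intro add_mono mult_left_mono FK) (use B0 in simp_all)
  also have "\<dots> = Q * (2*pi*B*c + 1) * (E * N)" by (simp add: algebra_simps)
  finally have X: "2*pi*B*(F * K) + F \<le> Q * (2*pi*B*c + 1) * (E * N)" .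
  have X0: "0 \<le> 2*pi*B*(F * K) + F" using B0 F0 K0 by simp
  have "(2*pi*B*(F * K) + F) / \<epsilon>^2 = (2*pi*B*(F * K) + F) * (1/\<epsilon>^2)" by simp
  also have "\<dots> \<le> (Q * (2*pi*B*c + 1) * (E * N)) * E"
    by (rule mult_mono[OF X eE]) (use X0 X in simp_all)
  finally have u1E: "(2*pi*B*(F * K) + F) / \<epsilon>^2 \<le> Q * (2*pi*B*c + 1) * E^2 * N"
    by (simp add: power2_eq_square ac_simps)
  have "Lp_norm p u1 \<le> q * ((2*pi*B*(F * K) + F) / \<epsilon>^2)"
    unfolding q_def by (rule Lp_AE_bounded(2)[OF p _ _ ce2]) (use X0 in simp_all)
  also have "\<dots> \<le> q * (Q * (2*pi*B*c + 1) * E^2 * N)" by (rule mult_left_mono[OF u1E q0])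
  finally have n2: "Lp_norm p u1 \<le> q * Q * (2*pi*B*c + 1) * E^2 * N" by (simp add: ac_simps)
  have P0: "0 \<le> B * (F * K)" using B0 F0 K0 by simp
  have "B * (F * K) / \<epsilon>^2 = B * (F * K) * (1/\<epsilon>^2)" by simp
  also have "\<dots> \<le> (B * ((Q * c) * (E * N))) * E"
    by (rule mult_mono[OF mult_left_mono[OF FK B0] eE]) (use P0 B0 Q0 c0 E1 N0 in simp_all)
  finally have u2E: "B * (F * K) / \<epsilon>^2 \<le> B * Q * c * E^2 * N"
    by (simp add: power2_eq_square ac_simps)
  have eN: "1/\<epsilon>^2 * N \<le> E^2 * N"
    using mult_right_mono[OF eE N0] EN by simp
  have "Lp_norm p u2 \<le> 2 * (1/\<epsilon>^2 * N + q * (B * (F * K) / \<epsilon>^2))"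
    unfolding N_def q_def by (rule Lp_norm_AE_le_affine[OF p Lf Lu(3) _ _ ce3]) (use P0 in simp_all)
  also have "\<dots> \<le> 2 * (E^2 * N + q * (B * Q * c * E^2 * N))"
    using eN mult_left_mono[OF u2E q0] by simp
  finally have n3: "Lp_norm p u2 \<le> 2 * (1 + q * B * Q * c) * E^2 * N" by (simp add: algebra_simps)
  have "W2p_norm p u u1 u2 \<le> C * E^2 * N"
    using n1 n2 n3 unfolding W2p_norm_def C_def by (simp add: algebra_simps)
  thus ?thesis unfolding E_def N_def f_def .
qed
section \<open>Volterra iteration\<close>

definition volterra :: "(real \<Rightarrow> real) \<Rightarrow> (real \<Rightarrow> real) \<Rightarrow> real \<Rightarrow> real" where
  "volterra c w = primitive (primitive (\<lambda>t. c t * w t))"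

lemma continuous_on_volterra:
  assumes c: "integrable S1 c" and w: "continuous_on {-pi..pi} w"
  shows "continuous_on {-pi..pi} (volterra c w)"
proof -
  have i: "integrable S1 (\<lambda>t. c t * w t)" by (rule integrable_S1_mult_continuous_on[OF c w])
  have "integrable S1 (primitive (\<lambda>t. c t * w t))" by (rule integrable_S1_continuous_on[OF continuous_on_primitive[OF i]])
  thus ?thesis unfolding volterra_def by (rule continuous_on_primitive)
qed

lemma integral_shifted_power_div_fact:
  assumes s: "s \<ge> -pi"
  shows "integral {-pi..s} (\<lambda>t. C * (t+pi)^k / fact k) = C * (s+pi)^Suc k / fact (Suc k)"
proof -
  have "((\<lambda>t. C * (t+pi)^k / fact k) has_integral (C * (s+pi)^Suc k / fact (Suc k) - C * (-pi+pi)^Suc k / fact (Suc k))) {-pi..s}"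
  proof (rule fundamental_theorem_of_calculus[OF s])
    fix t assume "t \<in> {-pi..s}"
    have "((\<lambda>t. C * (t+pi)^Suc k / fact (Suc k)) has_real_derivative
            C * (real (Suc k) * (t+pi)^k * 1) / fact (Suc k)) (at t within {-pi..s})"
      by (intro derivative_eq_intros) auto
    moreover have "C * (real (Suc k) * (t+pi)^k * 1) / fact (Suc k) = C * (t+pi)^k / fact k"
      by (simp add: fact_Suc field_simps del: of_nat_Suc)
    ultimately show "((\<lambda>t. C * (t+pi)^Suc k / fact (Suc k)) has_vector_derivative C * (t+pi)^k / fact k) (at t within {-pi..s})"
      by (simp add: has_real_derivative_iff_has_vector_derivative)
  qed
  hence "integral {-pi..s} (\<lambda>t. C * (t+pi)^k / fact k) = C * (s+pi)^Suc k / fact (Suc k) - C * (-pi+pi)^Suc k / fact (Suc k)"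
    by (rule integral_unique)
  thus ?thesis by simp
qed

lemma abs_volterra_le:
  assumes c: "integrable S1 c" and cb: "AE t in S1. \<bar>c t\<bar> \<le> L" and L: "L \<ge> 0"
    and w: "continuous_on {-pi..pi} w"
    and wb: "\<And>t. t \<in> {-pi..pi} \<Longrightarrow> \<bar>w t\<bar> \<le> K * (t+pi)^k / fact k"
    and x: "x \<in> {-pi..pi}"
  shows "\<bar>volterra c w x\<bar> \<le> (K*L) * (x+pi)^(Suc (Suc k)) / fact (Suc (Suc k))"
proof -
  have i: "integrable S1 (\<lambda>t. c t * w t)" by (rule integrable_S1_mult_continuous_on[OF c w])
  have b1: "AE t in S1. \<bar>c t * w t\<bar> \<le> (K*L) * (t+pi)^k / fact k"
  proof (rule eventually_mono[OF eventually_conj[OF cb AE_space]])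
    fix t assume a: "\<bar>c t\<bar> \<le> L \<and> t \<in> space S1"
    have "\<bar>c t * w t\<bar> = \<bar>c t\<bar> * \<bar>w t\<bar>" by (simp add: abs_mult)
    also have "\<dots> \<le> L * (K * (t+pi)^k / fact k)" using a wb[of t] L by (intro mult_mono) auto
    finally show "\<bar>c t * w t\<bar> \<le> (K*L) * (t+pi)^k / fact k" by (simp add: field_simps)
  qed
  have bc1: "continuous_on {-pi..pi} (\<lambda>t. (K*L) * (t+pi)^k / fact k)" by (intro continuous_intros) auto
  have p1: "\<bar>primitive (\<lambda>t. c t * w t) s\<bar> \<le> (K*L) * (s+pi)^Suc k / fact (Suc k)" if s: "s \<in> {-pi..pi}" for s
    using abs_primitive_le_primitive[OF i s b1 bc1] integral_shifted_power_div_fact[of s "K*L" k] s by simp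
  have pi1: "integrable S1 (primitive (\<lambda>t. c t * w t))" by (rule integrable_S1_continuous_on[OF continuous_on_primitive[OF i]])
  have b2: "AE s in S1. \<bar>primitive (\<lambda>t. c t * w t) s\<bar> \<le> (K*L) * (s+pi)^Suc k / fact (Suc k)"
    by (rule AE_S1_I) (rule p1)
  have bc2: "continuous_on {-pi..pi} (\<lambda>t. (K*L) * (t+pi)^Suc k / fact (Suc k))" by (intro continuous_intros) auto
  show ?thesis
    using abs_primitive_le_primitive[OF pi1 x b2 bc2] integral_shifted_power_div_fact[of x "K*L" "Suc k"] x unfolding volterra_def by simp
qed

lemma continuous_on_volterra_iterate:
  assumes c: "integrable S1 c" and w: "continuous_on {-pi..pi} w"
  shows "continuous_on {-pi..pi} ((volterra c ^^ n) w)"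
  by (induction n) (auto intro: continuous_on_volterra[OF c] w)

lemma abs_volterra_iterate_le:
  assumes c: "integrable S1 c" and cb: "AE t in S1. \<bar>c t\<bar> \<le> L" and L: "L \<ge> 0"
    and w: "continuous_on {-pi..pi} w" and wb: "\<And>t. t \<in> {-pi..pi} \<Longrightarrow> \<bar>w t\<bar> \<le> K0"
  shows "x \<in> {-pi..pi} \<Longrightarrow> \<bar>(volterra c ^^ n) w x\<bar> \<le> (K0 * L^n) * (x+pi)^(2*n) / fact (2*n)"
proof (induction n arbitrary: x)
  case 0 thus ?case using wb by simp
next
  case (Suc n)
  have "\<bar>volterra c ((volterra c ^^ n) w) x\<bar> \<le> ((K0 * L^n)*L) * (x+pi)^(Suc (Suc (2*n))) / fact (Suc (Suc (2*n)))"
    by (rule abs_volterra_le[OF c cb L continuous_on_volterra_iterate[OF c w] Suc.IH Suc.prems])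
  thus ?case by (simp add: mult.assoc mult.commute mult.left_commute)
qed

definition neumann_majorant :: "real \<Rightarrow> real \<Rightarrow> nat \<Rightarrow> real" where
  "neumann_majorant K0 L n = K0 * (L*(2*pi)^2)^n / fact n"

lemma summable_neumann_majorant: "summable (neumann_majorant K0 L)"
proof -
  have "summable (\<lambda>n. K0 * (inverse (fact n) * (L*(2*pi)^2)^n))"
    by (intro summable_mult summable_exp)
  thus ?thesis unfolding neumann_majorant_def by (simp add: field_simps)
qed

lemma abs_volterra_iterate_le_majorant:
  assumes c: "integrable S1 c" and cb: "AE t in S1. \<bar>c t\<bar> \<le> L" and L: "L \<ge> 0"
    and w: "continuous_on {-pi..pi} w" and wb: "\<And>t. t \<in> {-pi..pi} \<Longrightarrow> \<bar>w t\<bar> \<le> K0"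
    and x: "x \<in> {-pi..pi}"
  shows "\<bar>(volterra c ^^ n) w x\<bar> \<le> neumann_majorant K0 L n"
proof -
  have K0: "K0 \<ge> 0" using wb[of 0] by (smt (verit) atLeastAtMost_iff pi_ge_zero)
  have a: "\<bar>(volterra c ^^ n) w x\<bar> \<le> (K0 * L^n) * (x+pi)^(2*n) / fact (2*n)"
    by (rule abs_volterra_iterate_le[OF c cb L w wb x])
  have "(x+pi)^(2*n) \<le> (2*pi)^(2*n)" using x by (intro power_mono) auto
  also have "\<dots> = ((2*pi)^2)^n" by (simp add: power_mult)
  finally have b: "(x+pi)^(2*n) \<le> ((2*pi)^2)^n" .
  have f: "fact n \<le> (fact (2*n) :: real)" by (intro fact_mono) auto
  have "(K0 * L^n) * (x+pi)^(2*n) / fact (2*n) \<le> (K0 * L^n) * ((2*pi)^2)^n / fact (2*n)"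
    using b K0 L x by (intro divide_right_mono mult_left_mono) auto
  also have "\<dots> \<le> (K0 * L^n) * ((2*pi)^2)^n / fact n"
    using f K0 L by (intro divide_left_mono) (auto intro: mult_pos_pos)
  also have "\<dots> = neumann_majorant K0 L n" unfolding neumann_majorant_def by (simp add: power_mult_distrib)
  finally show ?thesis using a by simp
qed

definition neumann_series :: "(real \<Rightarrow> real) \<Rightarrow> (real \<Rightarrow> real) \<Rightarrow> real \<Rightarrow> real" where
  "neumann_series c w x = (\<Sum>n. (volterra c ^^ n) w x)"

lemma summable_neumann_series:
  assumes c: "integrable S1 c" and cb: "AE t in S1. \<bar>c t\<bar> \<le> L" and L: "L \<ge> 0"
    and w: "continuous_on {-pi..pi} w" and x: "x \<in> {-pi..pi}"
  shows "summable (\<lambda>n. (volterra c ^^ n) w x)"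
proof -
  obtain K0 where wb: "\<And>t. t \<in> {-pi..pi} \<Longrightarrow> \<bar>w t\<bar> \<le> K0" using continuous_on_S1_bounded[OF w] by blast
  show ?thesis
    by (rule summable_comparison_test[OF _ summable_neumann_majorant[of K0 L]])
       (use abs_volterra_iterate_le_majorant[OF c cb L w wb x] in auto)
qed

lemma continuous_on_neumann_series:
  assumes c: "integrable S1 c" and cb: "AE t in S1. \<bar>c t\<bar> \<le> L" and L: "L \<ge> 0"
    and w: "continuous_on {-pi..pi} w"
  shows "continuous_on {-pi..pi} (neumann_series c w)"
proof -
  obtain K0 where wb: "\<And>t. t \<in> {-pi..pi} \<Longrightarrow> \<bar>w t\<bar> \<le> K0" using continuous_on_S1_bounded[OF w] by blast
  have ul: "uniform_limit {-pi..pi} (\<lambda>n x. \<Sum>i<n. (volterra c ^^ i) w x) (neumann_series c w) sequentially"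
    unfolding neumann_series_def
    by (rule Weierstrass_m_test[OF _ summable_neumann_majorant[of K0 L]]) (use abs_volterra_iterate_le_majorant[OF c cb L w wb] in auto)
  show ?thesis
    by (rule uniform_limit_theorem[OF _ ul])
       (auto intro!: always_eventually continuous_on_sum continuous_on_volterra_iterate[OF c w])
qed

lemma primitive_suminf:
  fixes f :: "nat \<Rightarrow> real \<Rightarrow> real"
  assumes fi: "\<And>n. integrable S1 (f n)" and fb: "\<And>n. AE t in S1. \<bar>f n t\<bar> \<le> M n"
    and M: "summable M" and x: "x \<in> {-pi..pi}"
  shows "integrable S1 (\<lambda>t. \<Sum>n. f n t)" "primitive (\<lambda>t. \<Sum>n. f n t) x = (\<Sum>n. primitive (f n) x)"
proof -
  have fm[measurable]: "f n \<in> borel_measurable S1" for n using fi by simp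
  have sn: "AE t in S1. summable (\<lambda>n. norm (f n t))"
  proof -
    have "AE t in S1. \<forall>n. \<bar>f n t\<bar> \<le> M n" using fb by (simp add: AE_all_countable)
    thus ?thesis by (elim eventually_mono) (auto intro: summable_comparison_test[OF _ M])
  qed
  have si: "summable (\<lambda>n. \<integral>t. norm (f n t) \<partial>S1)"
  proof (rule summable_comparison_test[OF _ summable_mult[OF M, of "2*pi"]])
    show "\<exists>N. \<forall>n\<ge>N. norm (\<integral>t. norm (f n t) \<partial>S1) \<le> 2*pi * M n"
    proof (intro exI allI impI)
      fix n
      have "(\<integral>t. norm (f n t) \<partial>S1) \<le> (\<integral>t. M n \<partial>S1)"
        using fi fb[of n] by (intro integral_mono_AE) auto
      thus "norm (\<integral>t. norm (f n t) \<partial>S1) \<le> 2*pi * M n" by simp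
    qed
  qed
  show I: "integrable S1 (\<lambda>t. \<Sum>n. f n t)" by (rule integrable_suminf[OF fi sn si])
  define g where "g = (\<lambda>n t. indicator {..x} t * f n t)"
  have gi: "integrable S1 (g n)" for n unfolding g_def by (rule integrable_S1_indicator_mult[OF fi])
  have gsn: "AE t in S1. summable (\<lambda>n. norm (g n t))"
    using sn by (elim eventually_mono) (auto simp: g_def indicator_def)
  have gsi: "summable (\<lambda>n. \<integral>t. norm (g n t) \<partial>S1)"
  proof (rule summable_comparison_test[OF _ si])
    show "\<exists>N. \<forall>n\<ge>N. norm (\<integral>t. norm (g n t) \<partial>S1) \<le> (\<integral>t. norm (f n t) \<partial>S1)"
    proof (intro exI allI impI)
      fix n
      have "(\<integral>t. norm (g n t) \<partial>S1) \<le> (\<integral>t. norm (f n t) \<partial>S1)"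
        using gi fi by (intro integral_mono) (auto simp: g_def indicator_def)
      thus "norm (\<integral>t. norm (g n t) \<partial>S1) \<le> (\<integral>t. norm (f n t) \<partial>S1)" by simp
    qed
  qed
  have "primitive (\<lambda>t. \<Sum>n. f n t) x = (\<integral>t. indicator {..x} t * (\<Sum>n. f n t) \<partial>S1)"
    by (rule primitive_eq_integral_indicator[OF I x])
  also have "\<dots> = (\<integral>t. (\<Sum>n. g n t) \<partial>S1)"
  proof (rule integral_cong_AE)
    show "AE t in S1. indicator {..x} t * (\<Sum>n. f n t) = (\<Sum>n. g n t)"
      using sn by (elim eventually_mono) (auto simp: g_def suminf_mult summable_norm_cancel)
  qed (use I integrable_suminf[OF gi gsn gsi] in auto)
  also have "\<dots> = (\<Sum>n. \<integral>t. g n t \<partial>S1)" by (rule integral_suminf[OF gi gsn gsi])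
  also have "\<dots> = (\<Sum>n. primitive (f n) x)" unfolding g_def using primitive_eq_integral_indicator[OF fi x] by simp
  finally show "primitive (\<lambda>t. \<Sum>n. f n t) x = (\<Sum>n. primitive (f n) x)" .
qed

lemma volterra_neumann_series:
  assumes c: "integrable S1 c" and cb: "AE t in S1. \<bar>c t\<bar> \<le> L" and L: "L \<ge> 0"
    and w: "continuous_on {-pi..pi} w" and x: "x \<in> {-pi..pi}"
  shows "volterra c (neumann_series c w) x = (\<Sum>n. (volterra c ^^ Suc n) w x)"
proof -
  obtain K0 where wb: "\<And>t. t \<in> {-pi..pi} \<Longrightarrow> \<bar>w t\<bar> \<le> K0" using continuous_on_S1_bounded[OF w] by blast
  define u where "u = (\<lambda>n. (volterra c ^^ n) w)"
  have uc: "continuous_on {-pi..pi} (u n)" for n unfolding u_def by (rule continuous_on_volterra_iterate[OF c w])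
  have ub: "\<bar>u n t\<bar> \<le> neumann_majorant K0 L n" if "t \<in> {-pi..pi}" for n t
    unfolding u_def by (rule abs_volterra_iterate_le_majorant[OF c cb L w wb that])
  have Ms: "summable (\<lambda>n. L * neumann_majorant K0 L n)" by (intro summable_mult summable_neumann_majorant)
  have cu: "integrable S1 (\<lambda>t. c t * u n t)" for n by (rule integrable_S1_mult_continuous_on[OF c uc])
  have cub: "AE t in S1. \<bar>c t * u n t\<bar> \<le> L * neumann_majorant K0 L n" for n
  proof (rule eventually_mono[OF eventually_conj[OF cb AE_space]])
    fix t assume a: "\<bar>c t\<bar> \<le> L \<and> t \<in> space S1"
    have "\<bar>c t * u n t\<bar> = \<bar>c t\<bar> * \<bar>u n t\<bar>" by (simp add: abs_mult)
    also have "\<dots> \<le> L * neumann_majorant K0 L n" using a ub[of t n] L by (intro mult_mono) auto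
    finally show "\<bar>c t * u n t\<bar> \<le> L * neumann_majorant K0 L n" .
  qed
  have inner: "primitive (\<lambda>t. c t * neumann_series c w t) s = (\<Sum>n. primitive (\<lambda>t. c t * u n t) s)" if s: "s \<in> {-pi..pi}" for s
  proof -
    have "primitive (\<lambda>t. c t * neumann_series c w t) s = primitive (\<lambda>t. \<Sum>n. c t * u n t) s"
    proof (rule primitive_cong)
      fix t assume t: "t \<in> {-pi..s}"
      hence tI: "t \<in> {-pi..pi}" using s by auto
      show "c t * neumann_series c w t = (\<Sum>n. c t * u n t)"
        unfolding neumann_series_def u_def using summable_neumann_series[OF c cb L w tI] by (simp add: suminf_mult)
    qed
    also have "\<dots> = (\<Sum>n. primitive (\<lambda>t. c t * u n t) s)"
      by (rule primitive_suminf(2)[OF cu cub Ms s])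
    finally show ?thesis .
  qed
  define P where "P = (\<lambda>n. primitive (\<lambda>t. c t * u n t))"
  have Pi: "integrable S1 (P n)" for n unfolding P_def by (rule integrable_S1_continuous_on[OF continuous_on_primitive[OF cu]])
  have Pb: "AE s in S1. \<bar>P n s\<bar> \<le> 2*pi*(L * neumann_majorant K0 L n)" for n
  proof (rule AE_S1_I)
    fix s assume s: "s \<in> {-pi..pi}"
    have "\<bar>P n s\<bar> \<le> (\<integral>t. \<bar>c t * u n t\<bar> \<partial>S1)" unfolding P_def by (rule abs_primitive_le[OF cu s])
    also have "\<dots> \<le> (\<integral>t. L * neumann_majorant K0 L n \<partial>S1)"
      using cu cub[of n] by (intro integral_mono_AE) auto
    finally show "\<bar>P n s\<bar> \<le> 2*pi*(L * neumann_majorant K0 L n)" by simp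
  qed
  have Ms2: "summable (\<lambda>n. 2*pi*(L * neumann_majorant K0 L n))" by (intro summable_mult Ms)
  have "volterra c (neumann_series c w) x = primitive (\<lambda>s. \<Sum>n. P n s) x"
    unfolding volterra_def P_def by (rule primitive_cong) (use inner x in auto)
  also have "\<dots> = (\<Sum>n. primitive (P n) x)" by (rule primitive_suminf(2)[OF Pi Pb Ms2 x])
  also have "\<dots> = (\<Sum>n. (volterra c ^^ Suc n) w x)" unfolding P_def u_def volterra_def by simp
  finally show ?thesis .
qed

lemma neumann_series_fixpoint:
  assumes c: "integrable S1 c" and cb: "AE t in S1. \<bar>c t\<bar> \<le> L" and L: "L \<ge> 0"
    and w: "continuous_on {-pi..pi} w" and x: "x \<in> {-pi..pi}"
  shows "neumann_series c w x = w x + volterra c (neumann_series c w) x"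
proof -
  have s: "summable (\<lambda>n. (volterra c ^^ n) w x)" by (rule summable_neumann_series[OF c cb L w x])
  have "(\<Sum>n. (volterra c ^^ Suc n) w x) = neumann_series c w x - w x"
    unfolding neumann_series_def using suminf_split_head[OF s] by simp
  thus ?thesis using volterra_neumann_series[OF c cb L w x] by simp
qed

section \<open>Existence by shooting\<close>

lemma ivp_solution:
  fixes c k :: "real \<Rightarrow> real" and a b :: real
  assumes c: "integrable S1 c" and cb: "AE t in S1. \<bar>c t\<bar> \<le> L" and L: "L \<ge> 0"
    and k: "integrable S1 k"
  obtains y where "continuous_on {-pi..pi} y"
    and "\<And>x. x \<in> {-pi..pi} \<Longrightarrow> y x = a + primitive (\<lambda>s. b + primitive (\<lambda>t. c t * y t + k t) s) x"
proof -
  define w where "w = (\<lambda>x. a + b * (x + pi) + primitive (primitive k) x)"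
  have pk: "integrable S1 (primitive k)"
    by (rule integrable_S1_continuous_on[OF continuous_on_primitive[OF k]])
  have wc: "continuous_on {-pi..pi} w"
    unfolding w_def by (intro continuous_intros continuous_on_primitive pk)
  define y where "y = neumann_series c w"
  have yc: "continuous_on {-pi..pi} y"
    unfolding y_def by (rule continuous_on_neumann_series[OF c cb L wc])
  have cy: "integrable S1 (\<lambda>t. c t * y t)" by (rule integrable_S1_mult_continuous_on[OF c yc])
  have pcy: "integrable S1 (primitive (\<lambda>t. c t * y t))"
    by (rule integrable_S1_continuous_on[OF continuous_on_primitive[OF cy]])
  have "y x = a + primitive (\<lambda>s. b + primitive (\<lambda>t. c t * y t + k t) s) x" if x: "x \<in> {-pi..pi}" for x
  proof -
    have inner: "primitive (\<lambda>t. c t * y t + k t) s = primitive (\<lambda>t. c t * y t) s + primitive k s"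
      if "s \<in> {-pi..x}" for s
      by (rule primitive_add[OF cy k]) (use that x in simp)
    have "primitive (\<lambda>s. b + primitive (\<lambda>t. c t * y t + k t) s) x
        = primitive (\<lambda>s. b + (primitive (\<lambda>t. c t * y t) s + primitive k s)) x"
      by (rule primitive_cong) (simp add: inner)
    also have "\<dots> = primitive (\<lambda>s. b) x + (primitive (primitive (\<lambda>t. c t * y t)) x + primitive (primitive k) x)"
      using x pcy pk by (simp add: primitive_add)
    also have "\<dots> = b * (x + pi) + volterra c y x + primitive (primitive k) x"
      using x by (simp add: primitive_const volterra_def)
    finally have "primitive (\<lambda>s. b + primitive (\<lambda>t. c t * y t + k t) s) x
        = b * (x + pi) + volterra c y x + primitive (primitive k) x" .
    moreover have "y x = w x + volterra c y x"
      unfolding y_def by (rule neumann_series_fixpoint[OF c cb L wc x])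
    ultimately show ?thesis unfolding w_def by simp
  qed
  thus ?thesis using that yc by blast
qed

lemma linear_2x2_solvable:
  fixes \<alpha>1 \<beta>1 \<gamma>1 \<alpha>2 \<beta>2 \<gamma>2 :: real
  assumes inj: "\<And>a b. a * \<alpha>1 + b * \<beta>1 = 0 \<Longrightarrow> a * \<alpha>2 + b * \<beta>2 = 0 \<Longrightarrow> a = 0 \<and> b = 0"
  obtains a b where "a * \<alpha>1 + b * \<beta>1 + \<gamma>1 = 0" "a * \<alpha>2 + b * \<beta>2 + \<gamma>2 = 0"
proof -
  define D where "D = \<alpha>1 * \<beta>2 - \<beta>1 * \<alpha>2"
  have "D \<noteq> 0"
  proof
    assume D0: "D = 0"
    have "\<beta>1 = 0 \<and> \<alpha>1 = 0" using inj[of \<beta>1 "- \<alpha>1"] D0 unfolding D_def by (simp add: algebra_simps)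
    moreover have "\<beta>2 = 0 \<and> \<alpha>2 = 0" using inj[of \<beta>2 "- \<alpha>2"] D0 unfolding D_def by (simp add: algebra_simps)
    ultimately show False using inj[of 1 0] by simp
  qed
  define a where "a = (\<beta>1 * \<gamma>2 - \<beta>2 * \<gamma>1) / D"
  define b where "b = (\<alpha>2 * \<gamma>1 - \<alpha>1 * \<gamma>2) / D"
  have aD: "a * D = \<beta>1 * \<gamma>2 - \<beta>2 * \<gamma>1" and bD: "b * D = \<alpha>2 * \<gamma>1 - \<alpha>1 * \<gamma>2"
    unfolding a_def b_def using \<open>D \<noteq> 0\<close> by simp_all
  have "(a * \<alpha>1 + b * \<beta>1 + \<gamma>1) * D = \<alpha>1 * (a * D) + \<beta>1 * (b * D) + \<gamma>1 * D"
    by (simp add: algebra_simps)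
  also have "\<dots> = 0" by (simp only: aD bD) (simp add: D_def algebra_simps)
  finally have s1: "a * \<alpha>1 + b * \<beta>1 + \<gamma>1 = 0" using \<open>D \<noteq> 0\<close> by simp
  have "(a * \<alpha>2 + b * \<beta>2 + \<gamma>2) * D = \<alpha>2 * (a * D) + \<beta>2 * (b * D) + \<gamma>2 * D"
    by (simp add: algebra_simps)
  also have "\<dots> = 0" by (simp only: aD bD) (simp add: D_def algebra_simps)
  finally have "a * \<alpha>2 + b * \<beta>2 + \<gamma>2 = 0" using \<open>D \<noteq> 0\<close> by simp
  with s1 show ?thesis by (rule that)
qed

lemma periodic_homogeneous_solution_trivial:
  fixes V y :: "real \<Rightarrow> real" and a b :: real
  assumes eps: "\<epsilon> > 0" and m: "m > 0" and Vm[measurable]: "V \<in> borel_measurable S1"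
    and Vlow: "AE x in S1. V x \<ge> m" and Vup: "AE x in S1. \<bar>V x\<bar> \<le> B"
    and yc: "continuous_on {-pi..pi} y"
  defines "y2 \<equiv> \<lambda>t. V t / \<epsilon>^2 * y t"
  defines "y1 \<equiv> \<lambda>s. b + primitive y2 s"
  assumes y: "\<And>x. x \<in> {-pi..pi} \<Longrightarrow> y x = a + primitive y1 x"
    and d2: "(\<integral>t. y2 t \<partial>S1) = 0" and d1: "(\<integral>s. y1 s \<partial>S1) = 0"
  shows "a = 0 \<and> b = 0"
proof -
  have [measurable]: "y \<in> borel_measurable S1" by (rule continuous_on_imp_measurable_S1[OF yc])
  have "integrable S1 (\<lambda>t. V t / \<epsilon>^2)"
    by (rule integrable_S1_AE_bounded[of _ "B / \<epsilon>^2"])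
       (use Vup in \<open>auto simp: divide_right_mono elim!: eventually_mono\<close>)
  hence y2i: "integrable S1 y2"
    unfolding y2_def by (rule integrable_S1_mult_continuous_on[OF _ yc])
  have y1c: "continuous_on {-pi..pi} y1"
    unfolding y1_def by (intro continuous_intros continuous_on_primitive y2i)
  have y1i: "integrable S1 y1" by (rule integrable_S1_continuous_on[OF y1c])
  have w1: "weak_deriv y y1" by (rule weak_deriv_primitive[OF y1i d1 y])
  have w2: "weak_deriv y1 y2" by (rule weak_deriv_primitive[OF y2i d2]) (simp add: y1_def)
  have "AE x in S1. Lop \<epsilon> V y y2 x = 0"
    using eps by (intro AE_I2) (simp add: Lop_def y2_def)
  hence y0: "AE x in S1. y x = 0"
    by (rule Lop_eq_0_imp_eq_0[OF eps m Vm Vlow Vup integrable_S1_continuous_on[OF yc] y1i y2i w1 w2])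
  hence "AE t in S1. y2 t = 0" by (rule eventually_mono) (simp add: y2_def)
  hence "primitive y2 s = primitive (\<lambda>t. 0) s" if "s \<in> {-pi..pi}" for s
    by (intro primitive_cong_AE[OF y2i _ _ that]) simp_all
  hence y1b: "y1 s = b" if "s \<in> {-pi..pi}" for s using that by (simp add: y1_def primitive_def)
  have "(\<integral>s. y1 s \<partial>S1) = (\<integral>s. b \<partial>S1)" by (rule Bochner_Integration.integral_cong) (auto simp: y1b)
  hence b0: "b = 0" using d1 by simp
  have "y x = a" if "x \<in> {-pi..pi}" for x
  proof -
    have "primitive y1 x = primitive (\<lambda>s. 0) x" by (rule primitive_cong) (use y1b b0 that in auto)
    thus ?thesis using y[OF that] by (simp add: primitive_def)
  qed
  hence "AE x in S1. a = 0" using y0 by (auto elim!: eventually_mono[OF eventually_conj[OF _ AE_space]])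
  thus ?thesis using b0 AE_S1_const by blast
qed

lemma ivp_affine_family:
  fixes c k :: "real \<Rightarrow> real"
  assumes ci: "integrable S1 c" and cb: "AE t in S1. \<bar>c t\<bar> \<le> L" and L0: "L \<ge> 0"
    and ki: "integrable S1 k"
  obtains Y :: "real \<Rightarrow> real \<Rightarrow> real \<Rightarrow> real \<Rightarrow> real" and \<alpha>1 \<beta>1 \<gamma>1 \<alpha>2 \<beta>2 \<gamma>2 :: real
  where "\<And>a b r. continuous_on {-pi..pi} (Y a b r)"
    and "\<And>a b r x. x \<in> {-pi..pi} \<Longrightarrow>
           Y a b r x = a + primitive (\<lambda>s. b + primitive (\<lambda>t. c t * Y a b r t + r * k t) s) x"
    and "\<And>a b r. (\<integral>t. c t * Y a b r t + r * k t \<partial>S1) = a * \<alpha>1 + b * \<beta>1 + r * \<gamma>1"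
    and "\<And>a b r. (\<integral>s. b + primitive (\<lambda>t. c t * Y a b r t + r * k t) s \<partial>S1) = a * \<alpha>2 + b * \<beta>2 + r * \<gamma>2"
proof -
  have zero: "integrable S1 (\<lambda>t. 0::real)" by simp
  obtain Z1 where Z1c: "continuous_on {-pi..pi} Z1"
    and Z1: "\<And>x. x \<in> {-pi..pi} \<Longrightarrow> Z1 x = 1 + primitive (\<lambda>s. 0 + primitive (\<lambda>t. c t * Z1 t + 0) s) x"
    using ivp_solution[OF ci cb L0 zero, where a=1 and b=0] by blast
  obtain Z2 where Z2c: "continuous_on {-pi..pi} Z2"
    and Z2: "\<And>x. x \<in> {-pi..pi} \<Longrightarrow> Z2 x = 0 + primitive (\<lambda>s. 1 + primitive (\<lambda>t. c t * Z2 t + 0) s) x"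
    using ivp_solution[OF ci cb L0 zero, where a=0 and b=1] by blast
  obtain Z0 where Z0c: "continuous_on {-pi..pi} Z0"
    and Z0: "\<And>x. x \<in> {-pi..pi} \<Longrightarrow> Z0 x = 0 + primitive (\<lambda>s. 0 + primitive (\<lambda>t. c t * Z0 t + k t) s) x"
    using ivp_solution[OF ci cb L0 ki, where a=0 and b=0] by blast
  define Y where "Y = (\<lambda>a b r x. a * Z1 x + b * Z2 x + r * Z0 x)"
  define Y2 where "Y2 = (\<lambda>a b r t. c t * Y a b r t + r * k t)"
  define Y1 where "Y1 = (\<lambda>a b r s. b + primitive (Y2 a b r) s)"
  define D1 where "D1 = (\<lambda>s. 0 + primitive (\<lambda>t. c t * Z1 t + 0) s)"
  define D2 where "D2 = (\<lambda>s. 1 + primitive (\<lambda>t. c t * Z2 t + 0) s)"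
  define D0 where "D0 = (\<lambda>s. 0 + primitive (\<lambda>t. c t * Z0 t + k t) s)"
  have cZ: "integrable S1 (\<lambda>t. c t * Z1 t + 0)" "integrable S1 (\<lambda>t. c t * Z2 t + 0)"
    "integrable S1 (\<lambda>t. c t * Z0 t + k t)"
    using integrable_S1_mult_continuous_on[OF ci Z1c] integrable_S1_mult_continuous_on[OF ci Z2c]
      integrable_S1_mult_continuous_on[OF ci Z0c] ki by simp_all
  have Di: "integrable S1 D1" "integrable S1 D2" "integrable S1 D0"
    unfolding D1_def D2_def D0_def
    by (intro integrable_S1_continuous_on continuous_intros continuous_on_primitive cZ)+
  have Y2_eq: "Y2 a b r = (\<lambda>t. a * (c t * Z1 t + 0) + b * (c t * Z2 t + 0) + r * (c t * Z0 t + k t))"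
    for a b r unfolding Y2_def Y_def by (simp add: algebra_simps)
  have Y1_eq: "Y1 a b r s = a * D1 s + b * D2 s + r * D0 s" if "s \<in> {-pi..pi}" for a b r s
    using primitive_lincomb[OF cZ, of s a b r] that
    unfolding Y1_def Y2_eq D1_def D2_def D0_def by (simp add: algebra_simps)
  have Yc: "continuous_on {-pi..pi} (Y a b r)" for a b r
    unfolding Y_def by (intro continuous_intros Z1c Z2c Z0c)
  have Y_rep: "Y a b r x = a + primitive (Y1 a b r) x" if x: "x \<in> {-pi..pi}" for a b r x
  proof -
    have "primitive (Y1 a b r) x = primitive (\<lambda>s. a * D1 s + b * D2 s + r * D0 s) x"
      by (rule primitive_cong) (use x Y1_eq in auto)
    also have "\<dots> = a * primitive D1 x + b * primitive D2 x + r * primitive D0 x"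
      by (rule primitive_lincomb[OF Di]) (use x in simp)
    finally show ?thesis
      using Z1[OF x] Z2[OF x] Z0[OF x] unfolding Y_def D1_def D2_def D0_def by (simp add: algebra_simps)
  qed
  define \<alpha>1 \<beta>1 \<gamma>1 where "\<alpha>1 = (\<integral>t. c t * Z1 t + 0 \<partial>S1)" and "\<beta>1 = (\<integral>t. c t * Z2 t + 0 \<partial>S1)"
    and "\<gamma>1 = (\<integral>t. c t * Z0 t + k t \<partial>S1)"
  define \<alpha>2 \<beta>2 \<gamma>2 where "\<alpha>2 = (\<integral>s. D1 s \<partial>S1)" and "\<beta>2 = (\<integral>s. D2 s \<partial>S1)"
    and "\<gamma>2 = (\<integral>s. D0 s \<partial>S1)"
  have defect2: "(\<integral>t. Y2 a b r t \<partial>S1) = a * \<alpha>1 + b * \<beta>1 + r * \<gamma>1" for a b r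
    unfolding Y2_eq \<alpha>1_def \<beta>1_def \<gamma>1_def using cZ by simp
  have defect1: "(\<integral>s. Y1 a b r s \<partial>S1) = a * \<alpha>2 + b * \<beta>2 + r * \<gamma>2" for a b r
  proof -
    have "(\<integral>s. Y1 a b r s \<partial>S1) = (\<integral>s. a * D1 s + b * D2 s + r * D0 s \<partial>S1)"
      by (rule Bochner_Integration.integral_cong) (auto simp: Y1_eq)
    thus ?thesis unfolding \<alpha>2_def \<beta>2_def \<gamma>2_def using Di by simp
  qed
  show ?thesis
    by (rule that[OF Yc Y_rep[unfolded Y1_def Y2_def] defect2[unfolded Y2_def] defect1[unfolded Y1_def Y2_def]])
qed

text \<open>Shooting: the solutions of the initial value problem \<open>\<epsilon>\<^sup>2y'' = V y - g\<close> depend affinely on the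
  initial data \<open>(y(-\<pi>), y'(-\<pi>)) = (a, b)\<close>, and so do the two periodicity defects
  \<open>\<integral>y''\<close> and \<open>\<integral>y'\<close>; their linear part is injective because a periodic solution of the homogeneous equation vanishes.\<close>
lemma Lop_existence:
  fixes V g :: "real \<Rightarrow> real"
  assumes p: "p > 1" and eps: "\<epsilon> > 0" and m: "m > 0"
    and Vm[measurable]: "V \<in> borel_measurable S1"
    and Vlow: "AE x in S1. V x \<ge> m" and Vup: "AE x in S1. \<bar>V x\<bar> \<le> B"
    and g: "Lp p g"
  obtains u u1 u2 where "W2p p u u1 u2" and "AE x in S1. Lop \<epsilon> V u u2 x = g x"
proof -
  have gi: "integrable S1 g" by (rule Lp_imp_integrable[OF p g])
  have [measurable]: "g \<in> borel_measurable S1" using gi by simp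
  have B0: "B \<ge> 0"
    by (rule AE_S1_const) (use Vup in \<open>auto elim!: eventually_mono\<close>)
  define c where "c = (\<lambda>t. V t / \<epsilon>^2)"
  define L where "L = B / \<epsilon>^2"
  define k where "k = (\<lambda>t. - g t / \<epsilon>^2)"
  have L0: "L \<ge> 0" unfolding L_def using B0 by simp
  have cb: "AE t in S1. \<bar>c t\<bar> \<le> L"
    using Vup by (auto elim!: eventually_mono simp: c_def L_def divide_right_mono)
  have ci: "integrable S1 c" by (rule integrable_S1_AE_bounded[OF _ cb]) (simp add: c_def)
  have ki: "integrable S1 k" unfolding k_def using gi by simp
  obtain Y :: "real \<Rightarrow> real \<Rightarrow> real \<Rightarrow> real \<Rightarrow> real" and \<alpha>1 \<beta>1 \<gamma>1 \<alpha>2 \<beta>2 \<gamma>2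
    where Yc: "\<And>a b r. continuous_on {-pi..pi} (Y a b r)"
    and Y_rep: "\<And>a b r x. x \<in> {-pi..pi} \<Longrightarrow>
           Y a b r x = a + primitive (\<lambda>s. b + primitive (\<lambda>t. c t * Y a b r t + r * k t) s) x"
    and defect2: "\<And>a b r. (\<integral>t. c t * Y a b r t + r * k t \<partial>S1) = a * \<alpha>1 + b * \<beta>1 + r * \<gamma>1"
    and defect1: "\<And>a b r. (\<integral>s. b + primitive (\<lambda>t. c t * Y a b r t + r * k t) s \<partial>S1)
                   = a * \<alpha>2 + b * \<beta>2 + r * \<gamma>2"
    using ivp_affine_family[OF ci cb L0 ki] by blast
  define Y2 where "Y2 = (\<lambda>a b r t. c t * Y a b r t + r * k t)"
  define Y1 where "Y1 = (\<lambda>a b r s. b + primitive (Y2 a b r) s)"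
  have Y2i: "integrable S1 (Y2 a b r)" for a b r
    unfolding Y2_def using integrable_S1_mult_continuous_on[OF ci Yc] ki by simp
  have Y1c: "continuous_on {-pi..pi} (Y1 a b r)" for a b r
    unfolding Y1_def by (intro continuous_intros continuous_on_primitive Y2i)
  have Y1i: "integrable S1 (Y1 a b r)" for a b r by (rule integrable_S1_continuous_on[OF Y1c])
  have "a = 0 \<and> b = 0" if "a * \<alpha>1 + b * \<beta>1 = 0" "a * \<alpha>2 + b * \<beta>2 = 0" for a b
  proof (rule periodic_homogeneous_solution_trivial[OF eps m Vm Vlow Vup Yc])
    show "(\<integral>t. V t / \<epsilon>^2 * Y a b 0 t \<partial>S1) = 0" using defect2[of a b 0] that unfolding c_def by simp
    show "Y a b 0 x = a + primitive (\<lambda>s. b + primitive (\<lambda>t. V t / \<epsilon>^2 * Y a b 0 t) s) x"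
      if "x \<in> {-pi..pi}" for x
      using Y_rep[OF that, of a b 0] unfolding c_def by simp
    show "(\<integral>s. b + primitive (\<lambda>t. V t / \<epsilon>^2 * Y a b 0 t) s \<partial>S1) = 0"
      using defect1[where a=a and b=b and r=0] that unfolding c_def by simp
  qed
  then obtain a b where s1: "a * \<alpha>1 + b * \<beta>1 + \<gamma>1 = 0" and s2: "a * \<alpha>2 + b * \<beta>2 + \<gamma>2 = 0"
    by (rule linear_2x2_solvable)
  have d2: "(\<integral>t. Y2 a b 1 t \<partial>S1) = 0" using defect2[of a b 1] s1 unfolding Y2_def by simp
  have d1: "(\<integral>s. Y1 a b 1 s \<partial>S1) = 0" using defect1[where a=a and b=b and r=1] s2 unfolding Y1_def Y2_def by simp
  have "Y a b 1 x = a + primitive (Y1 a b 1) x" if "x \<in> {-pi..pi}" for x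
    using Y_rep[OF that] unfolding Y1_def Y2_def by simp
  hence w1: "weak_deriv (Y a b 1) (Y1 a b 1)" by (rule weak_deriv_primitive[OF Y1i d1])
  have w2: "weak_deriv (Y1 a b 1) (Y2 a b 1)" by (rule weak_deriv_primitive[OF Y2i d2]) (simp add: Y1_def)
  have LY: "Lp p (Y a b 1)" by (rule Lp_continuous_on[OF p Yc])
  have Y2b: "AE x in S1. \<bar>Y2 a b 1 x\<bar> \<le> 1/\<epsilon>^2 * \<bar>g x\<bar> + L * \<bar>Y a b 1 x\<bar>"
  proof (rule eventually_mono[OF cb])
    fix x assume cx: "\<bar>c x\<bar> \<le> L"
    have "\<bar>Y2 a b 1 x\<bar> \<le> \<bar>c x * Y a b 1 x\<bar> + \<bar>g x / \<epsilon>^2\<bar>"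
      unfolding Y2_def k_def using abs_triangle_ineq4[of "c x * Y a b 1 x" "g x / \<epsilon>^2"] by simp
    also have "\<bar>c x * Y a b 1 x\<bar> \<le> L * \<bar>Y a b 1 x\<bar>"
      unfolding abs_mult by (rule mult_right_mono[OF cx]) simp
    finally show "\<bar>Y2 a b 1 x\<bar> \<le> 1/\<epsilon>^2 * \<bar>g x\<bar> + L * \<bar>Y a b 1 x\<bar>"
      by (simp add: abs_divide)
  qed
  have "Lp p (Y2 a b 1)"
    by (rule Lp_AE_le_lincomb[OF p g LY _ _ L0 Y2b]) (use Y2i in simp_all)
  moreover have "Lop \<epsilon> V (Y a b 1) (Y2 a b 1) x = g x" for x
    unfolding Lop_def Y2_def c_def k_def using eps by (simp add: field_simps)
  ultimately show ?thesis
    using that[of "Y a b 1" "Y1 a b 1" "Y2 a b 1"] LY Lp_continuous_on[OF p Y1c] w1 w2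
    unfolding W2p_def by simp
qed

lemma max_one_inverse_square_sq:
  fixes \<epsilon> :: real
  assumes "0 < \<epsilon>" "\<epsilon> < 1"
  shows "(max 1 (1/\<epsilon>^2))^2 = \<epsilon> powr (-4)"
proof -
  have "1 \<le> 1/\<epsilon>^2" using assms by (simp add: power_le_one)
  hence "(max 1 (1/\<epsilon>^2))^2 = inverse (\<epsilon>^4)" by (simp add: power_divide field_simps)
  also have "\<dots> = \<epsilon> powr (-4)" using assms by (simp add: powr_minus powr_numeral)
  finally show ?thesis .
qed

theorem proposition4p7:
  fixes p m :: real and V :: "real \<Rightarrow> real"
  assumes "p > 1"
    and "Linf V"
    and "m > 0"
    and "AE x in S1. V x \<ge> m"
  shows "(\<forall>\<epsilon>>0.
            (\<forall>g. Lp p g \<longrightarrow> (\<exists>u u1 u2. W2p p u u1 u2 \<and> (AE x in S1. Lop \<epsilon> V u u2 x = g x)))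
          \<and> (\<forall>u u1 u2 v v1 v2. W2p p u u1 u2 \<and> W2p p v v1 v2 \<and>
                (AE x in S1. Lop \<epsilon> V u u2 x = Lop \<epsilon> V v v2 x) \<longrightarrow> (AE x in S1. u x = v x))
          \<and> (\<exists>K. \<forall>u u1 u2. W2p p u u1 u2 \<longrightarrow> W2p_norm p u u1 u2 \<le> K * Lp_norm p (Lop \<epsilon> V u u2)))
       \<and> (\<exists>C. \<exists>\<epsilon>0>0. \<forall>\<epsilon>. 0 < \<epsilon> \<and> \<epsilon> < \<epsilon>0 \<longrightarrow>
            (\<forall>u u1 u2. W2p p u u1 u2 \<longrightarrow>
               W2p_norm p u u1 u2 \<le> C * \<epsilon> powr (-4) * Lp_norm p (Lop \<epsilon> V u u2)))"
proof -
  note p = assms(1) and m = assms(3) and Vlow = assms(4)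
  have Vm: "V \<in> borel_measurable S1" using assms(2) unfolding Linf_def by auto
  obtain B where Vup: "AE x in S1. \<bar>V x\<bar> \<le> B" using assms(2) unfolding Linf_def by auto
  obtain C where est: "\<And>\<epsilon> u u1 u2. \<epsilon> > 0 \<Longrightarrow> W2p p u u1 u2 \<Longrightarrow>
      W2p_norm p u u1 u2 \<le> C * (max 1 (1/\<epsilon>^2))^2 * Lp_norm p (Lop \<epsilon> V u u2)"
    using W2p_norm_le_Lop[OF p _ m Vm Vlow Vup] by blast
  have "\<exists>u u1 u2. W2p p u u1 u2 \<and> (AE x in S1. Lop \<epsilon> V u u2 x = g x)" if "\<epsilon> > 0" "Lp p g" for \<epsilon> g
    using Lop_existence[OF p that(1) m Vm Vlow Vup that(2)] by blast
  moreover have "W2p_norm p u u1 u2 \<le> C * \<epsilon> powr (-4) * Lp_norm p (Lop \<epsilon> V u u2)"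
    if "0 < \<epsilon>" "\<epsilon> < 1" "W2p p u u1 u2" for \<epsilon> u u1 u2
    using est[OF that(1,3)] max_one_inverse_square_sq[OF that(1,2)] by simp
  hence "\<exists>\<epsilon>0>0. \<forall>\<epsilon>. 0 < \<epsilon> \<and> \<epsilon> < \<epsilon>0 \<longrightarrow> (\<forall>u u1 u2. W2p p u u1 u2 \<longrightarrow>
      W2p_norm p u u1 u2 \<le> C * \<epsilon> powr (-4) * Lp_norm p (Lop \<epsilon> V u u2))"
    by (intro exI[of _ 1]) auto
  ultimately show ?thesis
    using Lop_uniqueness[OF p _ m Vm Vlow Vup] est by blast
qed

end
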